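(* Let $\theta\in\mathbb{R}$, let $G$ be a graph with maximum degree at most $D$, and let $u$ be a $\theta$-positive vertex of $G$. Then $\nu_{G,u}$ has no extended states at $\theta$, i.e. \[\lim_{\varepsilon\to0+}\frac{\nu_{G,u}([\theta-\varepsilon,\theta+\varepsilon])-\nu_{G,u}(\{\theta\})}{\varepsilon}=0.\]
   Context: Matching measure: for a (not necessarily connected) graph $G$ and vertex $u$, $\nu_{G,u}$ is the spectral measure at the one-vertex path $u$ of the adjacency operator of the path tree $T(G,u)$ (vertices: finite paths in $G$ starting at $u$; two paths adjacent iff one is obtained from the other by deleting its last vertex). $G-u$ denotes $G$ with $u$ deleted. A vertex $u$ is $\theta$-positive in $G$ if $\sum_{v\sim u}\nu_{G-u,v}(\{\theta\})>0$, the sum over neighbors $v$ of $u$. *)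

theory Defs
  imports "HOL-Probability.Probability"
begin

text \<open>A (possibly infinite, simple) graph is given by a vertex set V and a
symmetric irreflexive edge relation E; only edges between vertices of V count.\<close>

definition simple_graph :: "'a set \<Rightarrow> ('a \<Rightarrow> 'a \<Rightarrow> bool) \<Rightarrow> bool" where
  "simple_graph V E \<longleftrightarrow> (\<forall>x y. E x y \<longrightarrow> E y x) \<and> (\<forall>x. \<not> E x x)"

definition nbrs :: "'a set \<Rightarrow> ('a \<Rightarrow> 'a \<Rightarrow> bool) \<Rightarrow> 'a \<Rightarrow> 'a set" where
  "nbrs V E x = {y \<in> V. E x y}"

definition max_degree_le :: "'a set \<Rightarrow> ('a \<Rightarrow> 'a \<Rightarrow> bool) \<Rightarrow> nat \<Rightarrow> bool" where
  "max_degree_le V E D \<longleftrightarrow> (\<forall>x\<in>V. finite (nbrs V E x) \<and> card (nbrs V E x) \<le> D)"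

definition is_path_from :: "'a set \<Rightarrow> ('a \<Rightarrow> 'a \<Rightarrow> bool) \<Rightarrow> 'a \<Rightarrow> 'a list \<Rightarrow> bool" where
  "is_path_from V E u p \<longleftrightarrow> p \<noteq> [] \<and> hd p = u \<and> distinct p \<and> set p \<subseteq> V \<and>
     (\<forall>i. Suc i < length p \<longrightarrow> E (p ! i) (p ! Suc i))"

definition path_tree_adj :: "'a set \<Rightarrow> ('a \<Rightarrow> 'a \<Rightarrow> bool) \<Rightarrow> 'a \<Rightarrow> 'a list \<Rightarrow> 'a list \<Rightarrow> bool" where
  "path_tree_adj V E u p q \<longleftrightarrow> is_path_from V E u p \<and> is_path_from V E u q \<and>
     ((\<exists>v. q = p @ [v]) \<or> (\<exists>v. p = q @ [v]))"

text \<open>Number of closed walks of length k at the root [u] of T(G,u); this is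
the k-th matrix entry of the adjacency operator, i.e. A^k at the root.\<close>
definition closed_walks_root :: "'a set \<Rightarrow> ('a \<Rightarrow> 'a \<Rightarrow> bool) \<Rightarrow> 'a \<Rightarrow> nat \<Rightarrow> nat" where
  "closed_walks_root V E u k = card {ws. length ws = Suc k \<and> ws ! 0 = [u] \<and> ws ! k = [u] \<and>
     (\<forall>i<k. path_tree_adj V E u (ws ! i) (ws ! Suc i))}"

text \<open>Matching measure: the spectral measure of the adjacency operator of T(G,u)
at the root, i.e. the Borel probability measure on the reals whose k-th moment
is the (root,root) entry of A^k (unique for bounded degree, since then the
measure is compactly supported).\<close>
definition matching_measure :: "'a set \<Rightarrow> ('a \<Rightarrow> 'a \<Rightarrow> bool) \<Rightarrow> 'a \<Rightarrow> real measure" where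
  "matching_measure V E u = (THE \<mu>. sets \<mu> = sets borel \<and> prob_space \<mu> \<and>
     (\<forall>k. integrable \<mu> (\<lambda>x. x ^ k) \<and> (\<integral>x. x ^ k \<partial>\<mu>) = real (closed_walks_root V E u k)))"

definition theta_positive :: "real \<Rightarrow> 'a set \<Rightarrow> ('a \<Rightarrow> 'a \<Rightarrow> bool) \<Rightarrow> 'a \<Rightarrow> bool" where
  "theta_positive \<theta> V E u \<longleftrightarrow>
     (\<Sum>v\<in>nbrs V E u. measure (matching_measure (V - {u}) E v) {\<theta>}) > 0"

end

(*
  The moments of nu_{G,u} count closed walks at the root e of the path tree T(G,u), so
  nu_{G,u} is the spectral measure of the adjacency operator A of T(G,u) at e:
  integral p d(nu_{G,u}) = <p(A) e, e>.  Positivity of this functional on the Bernstein basis of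
  [-D-1, D+1] produces such a measure (Hausdorff's moment method), and a compactly supported
  measure is determined by its moments.

  Removing the root splits T(G,u) into copies of the path trees T(G-u, v), v a neighbour of u.
  Placing f(A_v) e_v on these branches gives a vector Phi_f with
    A Phi_f = Phi_{x f} + (sum_v integral f d(nu_{G-u,v})) e,
  hence, for polynomials p and f,
    (sum_v integral f d(nu_{G-u,v})) * integral p d(nu_{G,u})
      = <((x - theta) p)(A) e, Phi_f> - <p(A) e, Phi_{(x - theta) f}>.
  Letting f tend to the indicator of theta and applying Cauchy-Schwarz gives, with
  c = sum_v nu_{G-u,v}({theta}) > 0,
    c * (integral g d(nu_{G,u}))^2 <= integral ((x - theta) g)^2 d(nu_{G,u})
  for continuous g.  A tent function g around theta turns this into
    c * nu([theta - eps, theta + eps])^2 <= 4 eps^2 * nu([theta - 2 eps, theta + 2 eps]),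
  which forces nu({theta}) = 0 and nu([theta - eps, theta + eps]) = O(eps^(3/2)).
*)

theory Submission
  imports Defs "HOL-Computational_Algebra.Polynomial" "HOL-Real_Asymp.Real_Asymp"
begin


section \<open>Finitely supported vectors\<close>

definition supp :: "('b \<Rightarrow> real) \<Rightarrow> 'b set" where
  "supp \<psi> = {x. \<psi> x \<noteq> 0}"

text \<open>The \<open>l\<^sup>2\<close> inner product, only ever applied to finitely supported vectors; summing over the
  support of the first argument makes it unconditionally defined.\<close>

definition fs_inner :: "('b \<Rightarrow> real) \<Rightarrow> ('b \<Rightarrow> real) \<Rightarrow> real" where
  "fs_inner \<psi> \<xi> = (\<Sum>x\<in>supp \<psi>. \<psi> x * \<xi> x)"

lemma supp_zero [simp]: "supp (\<lambda>x. 0) = {}"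
  by (simp add: supp_def)

lemma supp_indicator [simp]: "supp (indicator {b} :: 'b \<Rightarrow> real) = {b}"
  by (auto simp: supp_def indicator_def)

lemma supp_add: "supp (\<lambda>x. \<psi> x + \<phi> x) \<subseteq> supp \<psi> \<union> supp \<phi>"
  by (auto simp: supp_def)

lemma supp_scale: "supp (\<lambda>x. c * \<psi> x) \<subseteq> supp \<psi>"
  by (auto simp: supp_def)

lemma finite_supp_add:
  "finite (supp \<psi>) \<Longrightarrow> finite (supp \<phi>) \<Longrightarrow> finite (supp (\<lambda>x. \<psi> x + \<phi> x))"
  by (rule finite_subset[OF supp_add]) auto

lemma finite_supp_scale: "finite (supp \<psi>) \<Longrightarrow> finite (supp (\<lambda>x. c * \<psi> x))"
  by (rule finite_subset[OF supp_scale]) auto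

lemma fs_inner_eq_sum:
  assumes "finite F" "supp \<psi> \<subseteq> F"
  shows "fs_inner \<psi> \<xi> = (\<Sum>x\<in>F. \<psi> x * \<xi> x)"
  unfolding fs_inner_def
  by (rule sum.mono_neutral_left) (use assms in \<open>auto simp: supp_def\<close>)

lemma fs_inner_commute:
  assumes "finite (supp \<psi>)" "finite (supp \<xi>)"
  shows "fs_inner \<psi> \<xi> = fs_inner \<xi> \<psi>"
  using assms
  by (simp add: fs_inner_eq_sum[of "supp \<psi> \<union> supp \<xi>"] mult.commute)

lemma fs_inner_indicator_right:
  "finite (supp \<psi>) \<Longrightarrow> fs_inner \<psi> (indicator {b}) = \<psi> b"
  by (subst fs_inner_eq_sum[of "insert b (supp \<psi>)"])
     (auto simp: supp_def indicator_def if_distrib cong: if_cong)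

lemma fs_inner_zero_left [simp]: "fs_inner (\<lambda>x. 0) \<xi> = 0"
  by (simp add: fs_inner_def)

lemma fs_inner_self_nonneg: "0 \<le> fs_inner \<psi> \<psi>"
  unfolding fs_inner_def by (auto intro: sum_nonneg)

lemma fs_inner_Cauchy_Schwarz:
  assumes "finite (supp \<psi>)" "finite (supp \<xi>)"
  shows "\<bar>fs_inner \<psi> \<xi>\<bar> \<le> sqrt (fs_inner \<psi> \<psi>) * sqrt (fs_inner \<xi> \<xi>)"
proof -
  let ?F = "supp \<psi> \<union> supp \<xi>"
  have "(fs_inner \<psi> \<xi>)\<^sup>2 \<le> fs_inner \<psi> \<psi> * fs_inner \<xi> \<xi>"
    using assms Cauchy_Schwarz_ineq_sum[of \<psi> \<xi> ?F]
    by (simp add: fs_inner_eq_sum[of ?F] power2_eq_square)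
  then show ?thesis
    by (metis real_sqrt_abs real_sqrt_le_mono real_sqrt_mult)
qed

lemma fs_inner_add_left:
  assumes "finite (supp \<psi>)" "finite (supp \<phi>)"
  shows "fs_inner (\<lambda>x. \<psi> x + \<phi> x) \<xi> = fs_inner \<psi> \<xi> + fs_inner \<phi> \<xi>"
  using assms supp_add[of \<psi> \<phi>]
  by (simp add: fs_inner_eq_sum[of "supp \<psi> \<union> supp \<phi>"] algebra_simps sum.distrib)

lemma fs_inner_scale_left: "fs_inner (\<lambda>x. c * \<psi> x) \<xi> = c * fs_inner \<psi> \<xi>"
proof (cases "c = 0")
  case False
  then have "supp (\<lambda>x. c * \<psi> x) = supp \<psi>" by (auto simp: supp_def)
  then show ?thesis by (simp add: fs_inner_def sum_distrib_left mult.assoc)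
qed (simp add: fs_inner_def)

lemma fs_inner_add_right: "fs_inner \<psi> (\<lambda>x. \<xi> x + \<phi> x) = fs_inner \<psi> \<xi> + fs_inner \<psi> \<phi>"
  by (simp add: fs_inner_def algebra_simps sum.distrib)

lemma fs_inner_scale_right: "fs_inner \<psi> (\<lambda>x. c * \<xi> x) = c * fs_inner \<psi> \<xi>"
  by (simp add: fs_inner_def sum_distrib_left mult_ac)


section \<open>Hausdorff's moment problem on a symmetric interval\<close>

definition falling_fact :: "nat \<Rightarrow> nat \<Rightarrow> real" where
  "falling_fact j k = (\<Prod>l<k. real j - real l)"

lemma falling_fact_0 [simp]: "falling_fact j 0 = 1"
  by (simp add: falling_fact_def)

lemma falling_fact_eq_0: "j < k \<Longrightarrow> falling_fact j k = 0"
  unfolding falling_fact_def by (rule prod_zero) (auto intro!: bexI[of _ j])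

lemma falling_fact_pos: "k \<le> n \<Longrightarrow> 0 < falling_fact n k"
  unfolding falling_fact_def by (intro prod_pos) auto

lemma falling_fact_eq_fact: "k \<le> j \<Longrightarrow> falling_fact j k = fact j / fact (j - k)"
proof (induct k)
  case (Suc k)
  then have "falling_fact j (Suc k) = fact j / fact (j - k) * (real j - real k)"
    by (simp add: falling_fact_def)
  also have "fact (j - k) = (real j - real k) * fact (j - Suc k)"
    using Suc.prems by (simp add: fact_reduce of_nat_diff)
  finally show ?case
    using Suc.prems by simp
qed simp

lemma binomial_falling_fact:
  assumes "k \<le> j" "j \<le> n"
  shows "real (n choose j) * falling_fact j k = falling_fact n k * real ((n - k) choose (j - k))"
proof -
  have "n - k - (j - k) = n - j" using assms by simp
  then show ?thesis
    using assms by (simp add: falling_fact_eq_fact binomial_fact field_simps)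
qed

lemma smult_sum_right: "smult c (\<Sum>i\<in>S. f i) = (\<Sum>i\<in>S. smult c (f i))"
  by (induct S rule: infinite_finite_induct) (auto simp: smult_add_right)

text \<open>Factorial moments of the binomial distribution, as a polynomial identity.\<close>

lemma bernstein_falling_fact_sum:
  fixes a b :: "real poly"
  assumes ab: "a + b = 1"
  shows "(\<Sum>j\<le>n. smult (real (n choose j) * falling_fact j k) (a ^ j * b ^ (n - j)))
    = smult (falling_fact n k) (a ^ k)"
proof (cases "k \<le> n")
  case True
  let ?m = "n - k"
  have "(\<Sum>j\<le>n. smult (real (n choose j) * falling_fact j k) (a ^ j * b ^ (n - j)))
      = (\<Sum>j\<in>{k..n}. smult (falling_fact n k * real ((n - k) choose (j - k))) (a ^ j * b ^ (n - j)))"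
    by (rule sum.mono_neutral_cong_right) (auto simp: falling_fact_eq_0 binomial_falling_fact)
  also have "\<dots> = (\<Sum>i\<le>?m. smult (falling_fact n k * real (?m choose i)) (a ^ (i + k) * b ^ (?m - i)))"
  proof -
    have "{k..n} = {0 + k..?m + k}" using True by simp
    then show ?thesis
      by (simp only: sum.shift_bounds_cl_nat_ivl atLeast0AtMost)
         (intro sum.cong refl; simp add: algebra_simps)
  qed
  also have "\<dots> = smult (falling_fact n k) (a ^ k * (\<Sum>i\<le>?m. of_nat (?m choose i) * a ^ i * b ^ (?m - i)))"
    by (simp add: sum_distrib_left smult_sum_right smult_smult of_nat_poly power_add mult_ac)
  also have "(\<Sum>i\<le>?m. of_nat (?m choose i) * a ^ i * b ^ (?m - i)) = 1"
    using binomial_ring[of a b ?m] ab by simp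
  finally show ?thesis by simp
qed (simp add: falling_fact_eq_0)

lemma abs_prod_diff_le:
  fixes a b :: "nat \<Rightarrow> real"
  assumes "\<And>l. l < k \<Longrightarrow> \<bar>a l\<bar> \<le> 1" "\<And>l. l < k \<Longrightarrow> \<bar>b l\<bar> \<le> 1"
  shows "\<bar>(\<Prod>l<k. a l) - (\<Prod>l<k. b l)\<bar> \<le> (\<Sum>l<k. \<bar>a l - b l\<bar>)"
  using assms
proof (induct k)
  case (Suc k)
  have pb: "\<bar>\<Prod>l<k. b l\<bar> \<le> 1"
    using Suc.prems(2) unfolding abs_prod by (intro prod_le_1) auto
  have "(\<Prod>l<Suc k. a l) - (\<Prod>l<Suc k. b l)
      = ((\<Prod>l<k. a l) - (\<Prod>l<k. b l)) * a k + (\<Prod>l<k. b l) * (a k - b k)"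
    by (simp add: algebra_simps)
  also have "\<bar>\<dots>\<bar> \<le> \<bar>(\<Prod>l<k. a l) - (\<Prod>l<k. b l)\<bar> * \<bar>a k\<bar> + \<bar>\<Prod>l<k. b l\<bar> * \<bar>a k - b k\<bar>"
    by (metis abs_mult abs_triangle_ineq)
  also have "\<dots> \<le> \<bar>(\<Prod>l<k. a l) - (\<Prod>l<k. b l)\<bar> * 1 + 1 * \<bar>a k - b k\<bar>"
    using Suc.prems pb by (intro add_mono mult_mono) auto
  also have "\<dots> \<le> (\<Sum>l<k. \<bar>a l - b l\<bar>) + \<bar>a k - b k\<bar>"
    using Suc by simp
  finally show ?case by simp
qed simp

definition falling_fact_ratio_error :: "nat \<Rightarrow> nat \<Rightarrow> real" where
  "falling_fact_ratio_error n k = (\<Sum>l<k. real l / (real n - real l))"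

lemma falling_fact_ratio_error_tendsto_0: "(\<lambda>n. falling_fact_ratio_error n k) \<longlonglongrightarrow> 0"
  unfolding falling_fact_ratio_error_def by (intro tendsto_null_sum) real_asymp

lemma falling_fact_ratio_approx:
  assumes "j \<le> n" "2 * k \<le> n" "0 < n"
  shows "\<bar>(real j / real n) ^ k - falling_fact j k / falling_fact n k\<bar> \<le> falling_fact_ratio_error n k"
proof -
  have "\<bar>(real j / real n) ^ k - falling_fact j k / falling_fact n k\<bar>
     = \<bar>(\<Prod>l<k. real j / real n) - (\<Prod>l<k. (real j - real l) / (real n - real l))\<bar>"
    by (simp add: falling_fact_def prod_dividef)
  also have "\<dots> \<le> (\<Sum>l<k. \<bar>real j / real n - (real j - real l) / (real n - real l)\<bar>)"
  proof (rule abs_prod_diff_le)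
    fix l assume "l < k"
    then have "real l \<le> real n - real l" "real j \<le> real n" "0 < real n"
      using assms by linarith+
    then show "\<bar>real j / real n\<bar> \<le> 1" "\<bar>(real j - real l) / (real n - real l)\<bar> \<le> 1"
      by (auto simp: abs_le_iff le_divide_eq divide_le_eq)
  qed
  also have "\<dots> \<le> falling_fact_ratio_error n k"
    unfolding falling_fact_ratio_error_def
  proof (rule sum_mono)
    fix l assume "l \<in> {..<k}"
    then have nl: "real n - real l > 0" "real l \<le> real n" "real n > 0" "real j \<le> real n"
      using assms by auto
    have "real j / real n - (real j - real l) / (real n - real l)
        = (real l / (real n - real l)) * ((real n - real j) / real n)"
      using nl by (simp add: field_simps)
    moreover have "(real l / (real n - real l)) * ((real n - real j) / real n) \<le> real l / (real n - real l)"
      using nl by (intro mult_left_le) auto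
    ultimately show "\<bar>real j / real n - (real j - real l) / (real n - real l)\<bar> \<le> real l / (real n - real l)"
      using nl by simp
  qed
  finally show ?thesis .
qed

lemma weak_conv_AE_Icc:
  assumes \<mu>: "\<And>n. real_distribution (\<mu> n)" and M: "real_distribution M"
    and wc: "weak_conv_m \<mu> M" and supp: "\<And>n. AE x in \<mu> n. x \<in> {-\<beta>..\<beta>}"
  shows "AE x in M. x \<in> {-\<beta>..\<beta>}"
proof -
  interpret M: real_distribution M by (rule M)
  define excess where "excess x = min 1 (max 0 (\<bar>x\<bar> - \<beta>))" for x :: real
  have cont: "isCont excess x" for x
    unfolding excess_def by (intro continuous_intros)
  have meas: "excess \<in> borel_measurable borel"
    using cont by (intro borel_measurable_continuous_onI continuous_at_imp_continuous_on) auto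
  have "(\<lambda>n. integral\<^sup>L (\<mu> n) excess) \<longlonglongrightarrow> integral\<^sup>L M excess"
    by (rule weak_conv_imp_integral_bdd_continuous_conv[OF \<mu> M wc, of _ 1])
       (auto simp: excess_def cont)
  moreover have "integral\<^sup>L (\<mu> n) excess = 0" for n
    by (intro integral_eq_zero_AE eventually_mono[OF supp[of n]]) (auto simp: excess_def)
  ultimately have "integral\<^sup>L M excess = 0"
    by (simp add: LIMSEQ_const_iff)
  moreover have "integrable M excess"
    using meas by (intro M.integrable_const_bound[of _ 1]) (auto simp: excess_def)
  ultimately have "AE x in M. excess x = 0"
    by (subst (asm) integral_nonneg_eq_0_iff_AE) (auto simp: excess_def)
  then show ?thesis
    by eventually_elim (auto simp: excess_def min_def max_def split: if_splits)
qed

lemma weak_conv_moment_tendsto: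
  assumes \<mu>: "\<And>n. real_distribution (\<mu> n)" and M: "real_distribution M"
    and wc: "weak_conv_m \<mu> M" and supp: "\<And>n. AE x in \<mu> n. x \<in> {-\<beta>..\<beta>}"
  shows "integrable M (\<lambda>x. x ^ k)" "(\<lambda>n. \<integral>x. x ^ k \<partial>\<mu> n) \<longlonglongrightarrow> (\<integral>x. x ^ k \<partial>M)"
proof -
  define clip where "clip x = (max (-\<beta>) (min \<beta> x)) ^ k" for x :: real
  have cont: "isCont clip x" for x
    unfolding clip_def by (intro continuous_intros)
  have meas: "clip \<in> borel_measurable borel"
    using cont by (intro borel_measurable_continuous_onI continuous_at_imp_continuous_on) auto
  have bound: "\<bar>clip x\<bar> \<le> \<bar>\<beta>\<bar> ^ k" for x
    unfolding clip_def power_abs by (intro power_mono) auto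
  have clip_eq: "integrable N (\<lambda>x. x ^ k) \<and> (\<integral>x. x ^ k \<partial>N) = integral\<^sup>L N clip"
    if N: "real_distribution N" and "AE x in N. x \<in> {-\<beta>..\<beta>}" for N
  proof -
    interpret N: real_distribution N by (rule N)
    have ae: "AE x in N. clip x = x ^ k"
      using that(2) by eventually_elim (simp add: clip_def)
    have "integrable N clip"
      using meas bound by (intro N.integrable_const_bound) auto
    then have "integrable N (\<lambda>x. x ^ k)"
      by (rule integrable_cong_AE_imp) (use ae in auto)
    moreover have "(\<integral>x. x ^ k \<partial>N) = integral\<^sup>L N clip"
      by (rule integral_cong_AE) (use ae meas in \<open>auto elim: eventually_mono\<close>)
    ultimately show ?thesis ..
  qed
  have supp_M: "AE x in M. x \<in> {-\<beta>..\<beta>}"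
    by (rule weak_conv_AE_Icc[OF \<mu> M wc supp])
  show "integrable M (\<lambda>x. x ^ k)"
    using clip_eq[OF M supp_M] by blast
  have "(\<lambda>n. integral\<^sup>L (\<mu> n) clip) \<longlonglongrightarrow> integral\<^sup>L M clip"
    by (rule weak_conv_imp_integral_bdd_continuous_conv[OF \<mu> M wc cont]) (use bound in simp)
  then show "(\<lambda>n. \<integral>x. x ^ k \<partial>\<mu> n) \<longlonglongrightarrow> (\<integral>x. x ^ k \<partial>M)"
    using clip_eq[OF \<mu> supp] clip_eq[OF M supp_M] by simp
qed


text \<open>\<open>unit_coord \<beta>\<close> maps \<open>[-\<beta>, \<beta>]\<close> affinely onto \<open>[0, 1]\<close>.\<close>

definition unit_coord :: "real \<Rightarrow> real poly" where
  "unit_coord \<beta> = [:1/2, 1/(2*\<beta>):]"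

locale hausdorff_functional =
  fixes L :: "real poly \<Rightarrow> real" and \<beta> :: real
  assumes beta_pos: "0 < \<beta>"
    and L_add: "L (p + q) = L p + L q"
    and L_smult: "L (smult c p) = c * L p"
    and L_1: "L 1 = 1"
    and L_bernstein_nonneg: "0 \<le> L (unit_coord \<beta> ^ j * (1 - unit_coord \<beta>) ^ r)"
begin

lemma L_sum: "L (\<Sum>i\<in>I. f i) = (\<Sum>i\<in>I. L (f i))"
proof (induct I rule: infinite_finite_induct)
  case empty
  show ?case using L_smult[of 0 0] by simp
qed (use L_smult[of 0 0] in \<open>auto simp: L_add\<close>)

definition bernstein_weight :: "nat \<Rightarrow> nat \<Rightarrow> real" where
  "bernstein_weight n j = real (n choose j) * L (unit_coord \<beta> ^ j * (1 - unit_coord \<beta>) ^ (n - j))"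

lemma bernstein_weight_nonneg: "0 \<le> bernstein_weight n j"
  unfolding bernstein_weight_def using L_bernstein_nonneg by simp

lemma bernstein_weight_falling_fact:
  "(\<Sum>j\<le>n. bernstein_weight n j * falling_fact j k) = falling_fact n k * L (unit_coord \<beta> ^ k)"
  using arg_cong[OF bernstein_falling_fact_sum[of "unit_coord \<beta>" "1 - unit_coord \<beta>" n k], of L]
  by (simp add: L_sum L_smult bernstein_weight_def mult_ac)

lemma sum_bernstein_weight: "(\<Sum>j\<le>n. bernstein_weight n j) = 1"
  using bernstein_weight_falling_fact[of n 0] by (simp add: L_1)

lemma bernstein_moment_tendsto:
  "(\<lambda>n. \<Sum>j\<le>n. bernstein_weight n j * (real j / real n) ^ k) \<longlonglongrightarrow> L (unit_coord \<beta> ^ k)"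
proof -
  have "\<forall>\<^sub>F n in sequentially.
      \<bar>(\<Sum>j\<le>n. bernstein_weight n j * (real j / real n) ^ k) - L (unit_coord \<beta> ^ k)\<bar>
        \<le> falling_fact_ratio_error n k"
    using eventually_ge_at_top[of "Suc (2 * k)"]
  proof eventually_elim
    case (elim n)
    then have n: "0 < n" "2 * k \<le> n" by auto
    have "L (unit_coord \<beta> ^ k) = (\<Sum>j\<le>n. bernstein_weight n j * (falling_fact j k / falling_fact n k))"
      using bernstein_weight_falling_fact[of n k] falling_fact_pos[of k n] n
      by (simp add: sum_divide_distrib[symmetric] field_simps)
    then have "\<bar>(\<Sum>j\<le>n. bernstein_weight n j * (real j / real n) ^ k) - L (unit_coord \<beta> ^ k)\<bar>
        = \<bar>\<Sum>j\<le>n. bernstein_weight n j * ((real j / real n) ^ k - falling_fact j k / falling_fact n k)\<bar>"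
      by (simp add: sum_subtractf[symmetric] algebra_simps)
    also have "\<dots> \<le> (\<Sum>j\<le>n. bernstein_weight n j * falling_fact_ratio_error n k)"
      by (rule order_trans[OF sum_abs sum_mono])
         (use bernstein_weight_nonneg falling_fact_ratio_approx n
           in \<open>auto simp: abs_mult intro!: mult_left_mono\<close>)
    also have "\<dots> = falling_fact_ratio_error n k"
      by (simp add: sum_distrib_right[symmetric] sum_bernstein_weight)
    finally show ?case .
  qed
  then have "(\<lambda>n. (\<Sum>j\<le>n. bernstein_weight n j * (real j / real n) ^ k) - L (unit_coord \<beta> ^ k))
      \<longlonglongrightarrow> 0"
    by (intro Lim_null_comparison[OF _ falling_fact_ratio_error_tendsto_0]) simp
  then show ?thesis by (simp add: LIM_zero_iff)
qed

definition grid_point :: "nat \<Rightarrow> nat \<Rightarrow> real" where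
  "grid_point n j = 2 * \<beta> * (real j / real n) - \<beta>"

lemma grid_point_in_Icc: "j \<le> n \<Longrightarrow> grid_point n j \<in> {-\<beta>..\<beta>}"
  using beta_pos mult_left_le[of "real j / real n" "2 * \<beta>"]
  by (auto simp: grid_point_def divide_le_eq_1)

lemma monom_binomial_unit_coord:
  "(\<Sum>i\<le>k. smult (real (k choose i) * (2 * \<beta>) ^ i * (- \<beta>) ^ (k - i)) (unit_coord \<beta> ^ i))
    = monom 1 k"
proof -
  have "monom (1::real) k = (smult (2 * \<beta>) (unit_coord \<beta>) + [:- \<beta>:]) ^ k"
    using beta_pos by (simp add: unit_coord_def monom_altdef)
  also have "\<dots> = (\<Sum>i\<le>k. of_nat (k choose i) * (smult (2 * \<beta>) (unit_coord \<beta>)) ^ i * [:- \<beta>:] ^ (k - i))"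
    by (rule binomial_ring)
  also have "\<dots> = (\<Sum>i\<le>k. smult (real (k choose i) * (2 * \<beta>) ^ i * (- \<beta>) ^ (k - i)) (unit_coord \<beta> ^ i))"
    by (intro sum.cong refl) (simp add: smult_power poly_const_pow of_nat_poly mult_ac)
  finally show ?thesis by simp
qed

lemma grid_moment_tendsto:
  "(\<lambda>n. \<Sum>j\<le>n. bernstein_weight n j * grid_point n j ^ k) \<longlonglongrightarrow> L (monom 1 k)"
proof -
  define c where "c i = real (k choose i) * (2 * \<beta>) ^ i * (- \<beta>) ^ (k - i)" for i
  have "grid_point n j ^ k = (\<Sum>i\<le>k. c i * (real j / real n) ^ i)" for n j
  proof -
    define y where "y = real j / real n"
    have "grid_point n j ^ k = (2 * \<beta> * y + (- \<beta>)) ^ k"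
      by (simp add: grid_point_def y_def)
    also have "\<dots> = (\<Sum>i\<le>k. c i * y ^ i)"
      unfolding binomial_ring by (intro sum.cong refl) (simp add: c_def power_mult_distrib)
    finally show ?thesis by (simp add: y_def)
  qed
  then have eq: "(\<Sum>j\<le>n. bernstein_weight n j * grid_point n j ^ k)
      = (\<Sum>i\<le>k. c i * (\<Sum>j\<le>n. bernstein_weight n j * (real j / real n) ^ i))" for n
    by (simp add: sum_distrib_left sum_distrib_right mult_ac sum.swap[of _ "{..k}"])
  have "(\<lambda>n. \<Sum>i\<le>k. c i * (\<Sum>j\<le>n. bernstein_weight n j * (real j / real n) ^ i))
      \<longlonglongrightarrow> (\<Sum>i\<le>k. c i * L (unit_coord \<beta> ^ i))"
    by (intro tendsto_sum tendsto_mult_left bernstein_moment_tendsto)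
  also have "(\<Sum>i\<le>k. c i * L (unit_coord \<beta> ^ i)) = L (monom 1 k)"
    by (simp add: L_sum L_smult c_def monom_binomial_unit_coord[symmetric])
  finally show ?thesis by (simp add: eq)
qed

text \<open>The weak limit of these grid measures will be the measure with moment functional \<open>L\<close>.\<close>

definition grid_measure :: "nat \<Rightarrow> real measure" where
  "grid_measure n = distr (measure_pmf (embed_pmf (\<lambda>j. if j \<le> n then bernstein_weight n j else 0)))
     borel (grid_point n)"

lemma
  shows real_distribution_grid_measure: "real_distribution (grid_measure n)"
    and integral_grid_measure: "g \<in> borel_measurable borel \<Longrightarrow>
      integral\<^sup>L (grid_measure n) g = (\<Sum>j\<le>n. bernstein_weight n j * g (grid_point n j))"
    and AE_grid_measure_Icc: "AE x in grid_measure n. x \<in> {-\<beta>..\<beta>}"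
proof -
  define f where "f j = (if j \<le> n then bernstein_weight n j else 0)" for j
  have "(\<integral>\<^sup>+j. ennreal (f j) \<partial>count_space UNIV) = (\<Sum>j\<le>n. ennreal (f j))"
    by (rule nn_integral_count_space') (auto simp: f_def)
  also have "\<dots> = 1"
    using sum_bernstein_weight[of n] bernstein_weight_nonneg by (simp add: f_def)
  finally have pmf: "pmf (embed_pmf f) j = f j" for j
    using bernstein_weight_nonneg by (intro pmf_embed_pmf) (auto simp: f_def)
  have set_pmf: "set_pmf (embed_pmf f) \<subseteq> {..n}"
    by (auto simp: set_pmf_eq pmf f_def)
  show "real_distribution (grid_measure n)"
    by (auto simp: grid_measure_def real_distribution_def real_distribution_axioms_def
        intro!: prob_space.prob_space_distr prob_space_measure_pmf)
  show "integral\<^sup>L (grid_measure n) g = (\<Sum>j\<le>n. bernstein_weight n j * g (grid_point n j))"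
    if "g \<in> borel_measurable borel"
  proof -
    have "integral\<^sup>L (grid_measure n) g = (\<integral>j. g (grid_point n j) \<partial>measure_pmf (embed_pmf f))"
      unfolding grid_measure_def f_def[symmetric] by (rule integral_distr) (use that in auto)
    also have "\<dots> = (\<Sum>j\<le>n. g (grid_point n j) * pmf (embed_pmf f) j)"
      by (rule integral_measure_pmf_real) (use set_pmf in auto)
    finally show ?thesis by (simp add: pmf f_def mult.commute)
  qed
  have "AE j in measure_pmf (embed_pmf f). grid_point n j \<in> {-\<beta>..\<beta>}"
    using set_pmf grid_point_in_Icc by (auto simp: AE_measure_pmf_iff)
  then show "AE x in grid_measure n. x \<in> {-\<beta>..\<beta>}"
    unfolding grid_measure_def f_def[symmetric] by (subst AE_distr_iff) auto
qed

lemma tight_grid_measure: "tight grid_measure"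
  unfolding tight_def
proof (intro conjI allI impI real_distribution_grid_measure)
  fix \<epsilon> :: real assume "0 < \<epsilon>"
  have "measure (grid_measure n) {-\<beta>-1<..\<beta>+1} = 1" for n
  proof -
    interpret real_distribution "grid_measure n" by (rule real_distribution_grid_measure)
    show ?thesis
      using AE_grid_measure_Icc[of n] by (subst prob_eq_1) (auto elim: eventually_mono)
  qed
  then show "\<exists>a b. a < b \<and> (\<forall>n. 1 - \<epsilon> < measure (grid_measure n) {a<..b})"
    using \<open>0 < \<epsilon>\<close> beta_pos by (intro exI[of _ "-\<beta>-1"] exI[of _ "\<beta>+1"]) auto
qed

theorem moment_measure_exists:
  obtains M where "real_distribution M" "AE x in M. x \<in> {-\<beta>..\<beta>}"
    "\<And>k. integrable M (\<lambda>x. x ^ k)" "\<And>k. (\<integral>x. x ^ k \<partial>M) = L (monom 1 k)"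
proof -
  obtain r M where r: "strict_mono r" and M: "real_distribution M"
    and wc: "weak_conv_m (grid_measure \<circ> r) M"
    using tight_imp_convergent_subsubsequence[OF tight_grid_measure, of id]
    by (auto simp: strict_mono_def)
  have \<mu>: "real_distribution ((grid_measure \<circ> r) n)" for n
    by (simp add: real_distribution_grid_measure)
  have supp: "AE x in (grid_measure \<circ> r) n. x \<in> {-\<beta>..\<beta>}" for n
    unfolding comp_def by (rule AE_grid_measure_Icc)
  have "(\<lambda>n. \<integral>x. x ^ k \<partial>(grid_measure \<circ> r) n) \<longlonglongrightarrow> L (monom 1 k)" for k
    using LIMSEQ_subseq_LIMSEQ[OF grid_moment_tendsto r] by (simp add: integral_grid_measure comp_def)
  with weak_conv_moment_tendsto[OF \<mu> M wc supp] weak_conv_AE_Icc[OF \<mu> M wc supp]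
  show ?thesis
    by (metis M that LIMSEQ_unique)
qed

end


section \<open>Compactly supported measures are determined by their moments\<close>

lemma borel_measurable_poly [measurable]: "poly p \<in> borel_measurable borel"
  for p :: "real poly"
  by (intro borel_measurable_continuous_onI continuous_intros)

lemma (in real_distribution) integral_tendsto_AE_bounded:
  fixes s :: "nat \<Rightarrow> real \<Rightarrow> real"
  assumes "AE x in M. x \<in> S"
    and "\<And>n. s n \<in> borel_measurable borel" "f \<in> borel_measurable borel"
    and "\<And>x. x \<in> S \<Longrightarrow> (\<lambda>n. s n x) \<longlonglongrightarrow> f x"
    and "\<And>n x. x \<in> S \<Longrightarrow> \<bar>s n x\<bar> \<le> B"
  shows "(\<lambda>n. integral\<^sup>L M (s n)) \<longlonglongrightarrow> integral\<^sup>L M f"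
  by (rule integral_dominated_convergence[where w="\<lambda>x. B"])
     (use assms in \<open>auto elim: eventually_mono\<close>)

lemma integral_poly_eq_moments:
  fixes M :: "real measure"
  assumes "\<And>k. integrable M (\<lambda>x. x ^ k)"
  shows "integrable M (poly p)"
    and "(\<integral>x. poly p x \<partial>M) = (\<Sum>i\<le>degree p. coeff p i * (\<integral>x. x ^ i \<partial>M))"
  using assms by (simp_all add: poly_altdef[abs_def] integral_sum)

lemma polynomial_approximation_seq:
  fixes g :: "real \<Rightarrow> real"
  assumes "\<And>x. isCont g x" and bound: "\<And>x. \<bar>g x\<bar> \<le> B"
  obtains P :: "nat \<Rightarrow> real poly"
  where "\<And>x. x \<in> {a..b} \<Longrightarrow> (\<lambda>n. poly (P n) x) \<longlonglongrightarrow> g x"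
    and "\<And>n x. x \<in> {a..b} \<Longrightarrow> \<bar>poly (P n) x\<bar> \<le> B + 1"
proof -
  have "\<exists>P :: real poly. \<forall>x\<in>{a..b}. \<bar>poly P x - g x\<bar> \<le> 1 / Suc n" for n
  proof -
    obtain q where "real_polynomial_function q" and q: "\<And>x. x \<in> {a..b} \<Longrightarrow> \<bar>g x - q x\<bar> < 1 / Suc n"
      using Stone_Weierstrass_real_polynomial_function[of "{a..b}" g "1 / Suc n"] assms(1)
      by (auto intro: continuous_at_imp_continuous_on)
    then obtain c m where "q = (\<lambda>x. \<Sum>i\<le>m. c i * x ^ i)"
      using real_polynomial_function_iff_sum by blast
    then have "poly (\<Sum>i\<le>m. monom (c i) i) = q"
      by (simp add: poly_sum poly_monom fun_eq_iff)
    then show ?thesis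
      using q by (intro exI[of _ "\<Sum>i\<le>m. monom (c i) i"]) (auto simp: abs_minus_commute less_imp_le)
  qed
  then obtain P where P: "\<And>n x. x \<in> {a..b} \<Longrightarrow> \<bar>poly (P n) x - g x\<bar> \<le> 1 / Suc n"
    by metis
  show ?thesis
  proof
    fix x assume x: "x \<in> {a..b}"
    have "(\<lambda>n. poly (P n) x - g x) \<longlonglongrightarrow> 0"
      by (rule Lim_null_comparison[OF _ LIMSEQ_inverse_real_of_nat])
         (use P[OF x] in \<open>simp add: inverse_eq_divide\<close>)
    then show "(\<lambda>n. poly (P n) x) \<longlonglongrightarrow> g x"
      by (simp add: LIM_zero_iff)
    fix n
    have "1 / real (Suc n) \<le> 1" by simp
    then show "\<bar>poly (P n) x\<bar> \<le> B + 1"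
      using P[OF x, of n] bound[of x] by linarith
  qed
qed

lemma integral_eq_if_moments_eq:
  fixes M1 M2 :: "real measure" and g :: "real \<Rightarrow> real"
  assumes M1: "real_distribution M1" and M2: "real_distribution M2"
    and supp1: "AE x in M1. x \<in> {-R..R}" and supp2: "AE x in M2. x \<in> {-R..R}"
    and int1: "\<And>k. integrable M1 (\<lambda>x. x ^ k)" and int2: "\<And>k. integrable M2 (\<lambda>x. x ^ k)"
    and moments: "\<And>k. (\<integral>x. x ^ k \<partial>M1) = (\<integral>x. x ^ k \<partial>M2)"
    and g: "\<And>x. isCont g x" "\<And>x. \<bar>g x\<bar> \<le> B"
  shows "integral\<^sup>L M1 g = integral\<^sup>L M2 g"
proof -
  obtain P where P: "\<And>x. x \<in> {-R..R} \<Longrightarrow> (\<lambda>n. poly (P n) x) \<longlonglongrightarrow> g x"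
    "\<And>n x. x \<in> {-R..R} \<Longrightarrow> \<bar>poly (P n) x\<bar> \<le> B + 1"
    using polynomial_approximation_seq[OF g] by blast
  have meas: "g \<in> borel_measurable borel"
    using g(1) by (intro borel_measurable_continuous_onI continuous_at_imp_continuous_on) auto
  have lim: "(\<lambda>n. \<integral>x. poly (P n) x \<partial>M) \<longlonglongrightarrow> integral\<^sup>L M g"
    if "real_distribution M" "AE x in M. x \<in> {-R..R}" for M
    by (rule real_distribution.integral_tendsto_AE_bounded[OF that, where B = "B + 1"])
       (use meas P in auto)
  have "(\<integral>x. poly (P n) x \<partial>M1) = (\<integral>x. poly (P n) x \<partial>M2)" for n
    by (simp add: integral_poly_eq_moments int1 int2 moments)
  then show ?thesis
    using LIMSEQ_unique[OF lim[OF M1 supp1]] lim[OF M2 supp2] by simp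
qed

lemma real_distribution_eq_if_integrals_eq:
  fixes M1 M2 :: "real measure"
  assumes M1: "real_distribution M1" and M2: "real_distribution M2"
    and eq: "\<And>g :: real \<Rightarrow> real. (\<And>x. isCont g x) \<Longrightarrow> (\<And>x. \<bar>g x\<bar> \<le> 1) \<Longrightarrow> integral\<^sup>L M1 g = integral\<^sup>L M2 g"
  shows "M1 = M2"
proof (rule Levy_uniqueness[OF M1 M2 ext])
  fix t :: real
  have "char M t = complex_of_real (\<integral>x. cos (t * x) \<partial>M) + \<i> * complex_of_real (\<integral>x. sin (t * x) \<partial>M)"
    if "real_distribution M" for M
  proof -
    interpret real_distribution M by (rule that)
    have "iexp (t * x) = complex_of_real (cos (t * x)) + \<i> * complex_of_real (sin (t * x))" for x
      by (simp add: exp_eq_polar cis.code Complex_eq)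
    moreover have "integrable M (\<lambda>x. cos (t * x))" "integrable M (\<lambda>x. sin (t * x))"
      by (intro integrable_const_bound[of _ 1]; simp)+
    ultimately show ?thesis
      by (simp add: char_def)
  qed
  moreover have "(\<integral>x. cos (t * x) \<partial>M1) = (\<integral>x. cos (t * x) \<partial>M2)"
    by (rule eq) (auto intro!: continuous_intros)
  moreover have "(\<integral>x. sin (t * x) \<partial>M1) = (\<integral>x. sin (t * x) \<partial>M2)"
    by (rule eq) (auto intro!: continuous_intros)
  ultimately show "char M1 t = char M2 t"
    using M1 M2 by simp
qed

theorem measure_eq_if_moments_eq:
  fixes M1 M2 :: "real measure"
  assumes "real_distribution M1" "real_distribution M2"
    and "AE x in M1. x \<in> {-R..R}" "AE x in M2. x \<in> {-R..R}"
    and "\<And>k. integrable M1 (\<lambda>x. x ^ k)" "\<And>k. integrable M2 (\<lambda>x. x ^ k)"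
    and "\<And>k. (\<integral>x. x ^ k \<partial>M1) = (\<integral>x. x ^ k \<partial>M2)"
  shows "M1 = M2"
proof (rule real_distribution_eq_if_integrals_eq)
  fix g :: "real \<Rightarrow> real"
  assume "\<And>x. isCont g x" "\<And>x. \<bar>g x\<bar> \<le> 1"
  then show "integral\<^sup>L M1 g = integral\<^sup>L M2 g"
    by (rule integral_eq_if_moments_eq[OF assms])
qed (use assms in auto)

lemma (in real_distribution) prob_abs_ge_le_moment:
  assumes "0 < r" "even m" "0 < m" and int: "integrable M (\<lambda>x. x ^ m)"
  shows "prob {x. r \<le> \<bar>x\<bar>} \<le> (\<integral>x. x ^ m \<partial>M) / r ^ m"
proof -
  have "r \<le> \<bar>x\<bar> \<longleftrightarrow> r ^ m \<le> x ^ m" for x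
  proof -
    have "x ^ m = \<bar>x\<bar> ^ m"
      using \<open>even m\<close> by (rule power_even_abs[symmetric])
    then show ?thesis
      using power_mono_iff[of r "\<bar>x\<bar>" m] assms(1,3) by simp
  qed
  then have "prob {x. r \<le> \<bar>x\<bar>} = prob {x \<in> space M. r ^ m \<le> x ^ m}"
    by simp
  also have "\<dots> \<le> (\<integral>x. x ^ m \<partial>M) / r ^ m"
    by (rule integral_Markov_inequality_measure[OF int, where A = "space M"])
       (use assms zero_le_even_power[of m] in auto)
  finally show ?thesis .
qed

lemma (in real_distribution) AE_Icc_if_even_moments_le:
  assumes "0 \<le> \<beta>" and int: "\<And>k. integrable M (\<lambda>x. x ^ k)"
    and moments: "\<And>k. (\<integral>x. x ^ (2 * k) \<partial>M) \<le> \<beta> ^ (2 * k)"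
  shows "AE x in M. x \<in> {-\<beta>..\<beta>}"
proof -
  have null: "AE x in M. \<bar>x\<bar> < r" if r: "\<beta> < r" for r
  proof -
    have "prob {x. r \<le> \<bar>x\<bar>} \<le> (\<beta> / r) ^ k" for k
    proof -
      have "prob {x. r \<le> \<bar>x\<bar>} \<le> (\<integral>x. x ^ (2 * Suc k) \<partial>M) / r ^ (2 * Suc k)"
        using r assms(1) by (intro prob_abs_ge_le_moment int) auto
      also have "\<dots> \<le> (\<beta> / r) ^ (2 * Suc k)"
        using r assms(1) moments[of "Suc k"] by (simp add: power_divide divide_right_mono)
      also have "\<dots> \<le> (\<beta> / r) ^ k"
        using assms(1) r by (intro power_decreasing) auto
      finally show ?thesis .
    qed
    moreover have "(\<lambda>k. (\<beta> / r) ^ k) \<longlonglongrightarrow> 0"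
      using assms(1) r by (intro LIMSEQ_power_zero) auto
    ultimately have "prob {x. r \<le> \<bar>x\<bar>} \<le> 0"
      using LIMSEQ_le_const by blast
    moreover have "{x. r \<le> \<bar>x\<bar>} \<in> events"
      by (auto intro!: borel_closed closed_Collect_le continuous_intros)
    ultimately have "AE x in M. x \<notin> {x. r \<le> \<bar>x\<bar>}"
      by (simp add: prob_eq_0 measure_le_0_iff)
    then show ?thesis
      by eventually_elim auto
  qed
  have "AE x in M. \<forall>m::nat. \<bar>x\<bar> < \<beta> + inverse (real (Suc m))"
    by (subst AE_all_countable) (auto intro!: null)
  then show ?thesis
  proof eventually_elim
    case (elim x)
    have "\<bar>x\<bar> \<le> \<beta>"
    proof (rule ccontr)
      assume "\<not> \<bar>x\<bar> \<le> \<beta>"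
      then obtain m where "inverse (real (Suc m)) < \<bar>x\<bar> - \<beta>"
        using reals_Archimedean[of "\<bar>x\<bar> - \<beta>"] by auto
      with elim[rule_format, of m] show False by simp
    qed
    then show ?case by (simp add: abs_le_iff)
  qed
qed


section \<open>Adjacency operators of graphs of bounded degree\<close>

locale bounded_degree_graph =
  fixes adj :: "'b \<Rightarrow> 'b \<Rightarrow> bool" and \<Delta> :: nat
  assumes adj_sym: "adj p q \<Longrightarrow> adj q p"
    and finite_nbhd: "finite {q. adj p q}"
    and card_nbhd_le: "card {q. adj p q} \<le> \<Delta>"
begin

definition adj_op :: "('b \<Rightarrow> real) \<Rightarrow> 'b \<Rightarrow> real" where
  "adj_op \<psi> p = (\<Sum>q | adj p q. \<psi> q)"

lemma supp_adj_op: "supp (adj_op \<psi>) \<subseteq> (\<Union>q\<in>supp \<psi>. {p. adj q p})"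
proof
  fix p assume "p \<in> supp (adj_op \<psi>)"
  then obtain q where "adj p q" "\<psi> q \<noteq> 0"
    by (auto simp: supp_def adj_op_def dest: sum.not_neutral_contains_not_neutral)
  then show "p \<in> (\<Union>q\<in>supp \<psi>. {p. adj q p})"
    using adj_sym by (auto simp: supp_def)
qed

lemma finite_supp_adj_op: "finite (supp \<psi>) \<Longrightarrow> finite (supp (adj_op \<psi>))"
  by (rule finite_subset[OF supp_adj_op]) (auto intro: finite_nbhd)

lemma adj_op_add: "adj_op (\<lambda>x. \<psi> x + \<phi> x) = (\<lambda>x. adj_op \<psi> x + adj_op \<phi> x)"
  by (simp add: adj_op_def sum.distrib fun_eq_iff)

lemma adj_op_scale: "adj_op (\<lambda>x. c * \<psi> x) = (\<lambda>x. c * adj_op \<psi> x)"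
  by (simp add: adj_op_def sum_distrib_left fun_eq_iff)

lemma adj_op_zero [simp]: "adj_op (\<lambda>x. 0) = (\<lambda>x. 0)"
  by (simp add: adj_op_def fun_eq_iff)

lemma adj_op_eq_sum:
  assumes "finite F" "supp \<psi> \<subseteq> F"
  shows "adj_op \<psi> p = (\<Sum>q\<in>F. if adj p q then \<psi> q else 0)"
proof -
  have "adj_op \<psi> p = (\<Sum>q\<in>F \<inter> {q. adj p q}. \<psi> q)"
    unfolding adj_op_def
    by (rule sum.mono_neutral_right) (use assms finite_nbhd in \<open>auto simp: supp_def\<close>)
  then show ?thesis
    by (simp add: sum.inter_restrict[OF assms(1)])
qed

lemma adj_op_self_adjoint:
  assumes "finite (supp \<psi>)" "finite (supp \<xi>)"
  shows "fs_inner (adj_op \<psi>) \<xi> = fs_inner \<psi> (adj_op \<xi>)"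
proof -
  define F where "F = supp \<psi> \<union> supp \<xi> \<union> supp (adj_op \<psi>) \<union> supp (adj_op \<xi>)"
  have F: "finite F" using assms finite_supp_adj_op by (auto simp: F_def)
  have "fs_inner (adj_op \<psi>) \<xi> = (\<Sum>p\<in>F. adj_op \<psi> p * \<xi> p)"
    by (rule fs_inner_eq_sum[OF F]) (auto simp: F_def)
  also have "\<dots> = (\<Sum>p\<in>F. \<Sum>q\<in>F. if adj p q then \<psi> q * \<xi> p else 0)"
    by (subst adj_op_eq_sum[OF F]) (auto simp: F_def sum_distrib_right intro!: sum.cong)
  also have "\<dots> = (\<Sum>q\<in>F. \<Sum>p\<in>F. if adj q p then \<psi> q * \<xi> p else 0)"
    by (subst sum.swap) (use adj_sym in \<open>auto intro!: sum.cong\<close>)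
  also have "\<dots> = (\<Sum>q\<in>F. \<psi> q * adj_op \<xi> q)"
    by (subst adj_op_eq_sum[OF F]) (auto simp: F_def sum_distrib_left intro!: sum.cong)
  also have "\<dots> = fs_inner \<psi> (adj_op \<xi>)"
    by (rule fs_inner_eq_sum[OF F, symmetric]) (auto simp: F_def)
  finally show ?thesis .
qed

lemma sum_adjacent_le:
  assumes F: "finite F" and w: "\<And>q. 0 \<le> w q"
  shows "(\<Sum>p\<in>F. \<Sum>q\<in>F. if adj p q then w q else 0) \<le> real \<Delta> * (\<Sum>q\<in>F. w q)"
proof -
  have "{p \<in> F. adj p q} = {p \<in> F. adj q p}" for q
    using adj_sym by blast
  then have "(\<Sum>p\<in>F. if adj p q then w q else 0) = w q * card {p \<in> F. adj q p}" for q
    using sum.inter_filter[OF F, of "\<lambda>_. w q" "\<lambda>p. adj p q"] by (simp add: mult.commute)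
  then have "(\<Sum>p\<in>F. \<Sum>q\<in>F. if adj p q then w q else 0) = (\<Sum>q\<in>F. w q * card {p \<in> F. adj q p})"
    by (subst sum.swap) simp
  also have "\<dots> \<le> (\<Sum>q\<in>F. w q * real \<Delta>)"
  proof (rule sum_mono)
    fix q
    have "card {p \<in> F. adj q p} \<le> \<Delta>"
      using card_nbhd_le[of q] card_mono[OF finite_nbhd, of "{p \<in> F. adj q p}" q] by force
    then show "w q * card {p \<in> F. adj q p} \<le> w q * real \<Delta>"
      using w by (simp add: mult_left_mono)
  qed
  finally show ?thesis
    by (simp add: sum_distrib_left mult.commute)
qed

lemma fs_inner_adj_op_self_le:
  assumes "finite (supp \<psi>)"
  shows "fs_inner (adj_op \<psi>) (adj_op \<psi>) \<le> (real \<Delta>)\<^sup>2 * fs_inner \<psi> \<psi>"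
proof -
  define F where "F = supp \<psi> \<union> supp (adj_op \<psi>)"
  have F: "finite F" using assms finite_supp_adj_op by (auto simp: F_def)
  have "fs_inner (adj_op \<psi>) (adj_op \<psi>) = (\<Sum>p\<in>F. (adj_op \<psi> p)\<^sup>2)"
    by (subst fs_inner_eq_sum[OF F]) (auto simp: F_def power2_eq_square)
  also have "\<dots> \<le> (\<Sum>p\<in>F. real \<Delta> * (\<Sum>q\<in>F. if adj p q then (\<psi> q)\<^sup>2 else 0))"
  proof (rule sum_mono)
    fix p
    have "(adj_op \<psi> p)\<^sup>2 \<le> (\<Sum>q | adj p q. (\<psi> q)\<^sup>2) * card {q. adj p q}"
      unfolding adj_op_def by (rule sum_squared_le_sum_of_squares)
    also have "\<dots> \<le> (\<Sum>q | adj p q. (\<psi> q)\<^sup>2) * real \<Delta>"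
      by (rule mult_left_mono) (auto intro: sum_nonneg simp: card_nbhd_le)
    also have "(\<Sum>q | adj p q. (\<psi> q)\<^sup>2) = adj_op (\<lambda>q. (\<psi> q)\<^sup>2) p"
      by (simp add: adj_op_def)
    also have "\<dots> = (\<Sum>q\<in>F. if adj p q then (\<psi> q)\<^sup>2 else 0)"
      by (rule adj_op_eq_sum[OF F]) (auto simp: F_def supp_def)
    finally show "(adj_op \<psi> p)\<^sup>2 \<le> real \<Delta> * (\<Sum>q\<in>F. if adj p q then (\<psi> q)\<^sup>2 else 0)"
      by (simp add: mult.commute)
  qed
  also have "\<dots> \<le> real \<Delta> * (real \<Delta> * (\<Sum>q\<in>F. (\<psi> q)\<^sup>2))"
    unfolding sum_distrib_left[symmetric] by (intro mult_left_mono sum_adjacent_le F) auto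
  also have "(\<Sum>q\<in>F. (\<psi> q)\<^sup>2) = fs_inner \<psi> \<psi>"
    by (subst fs_inner_eq_sum[OF F]) (auto simp: F_def power2_eq_square)
  finally show ?thesis
    by (simp add: power2_eq_square mult.assoc)
qed

lemma abs_fs_inner_adj_op_le:
  assumes "finite (supp \<psi>)"
  shows "\<bar>fs_inner (adj_op \<psi>) \<psi>\<bar> \<le> real \<Delta> * fs_inner \<psi> \<psi>"
proof -
  have "\<bar>fs_inner (adj_op \<psi>) \<psi>\<bar> \<le> sqrt (fs_inner (adj_op \<psi>) (adj_op \<psi>)) * sqrt (fs_inner \<psi> \<psi>)"
    by (rule fs_inner_Cauchy_Schwarz) (use assms finite_supp_adj_op in auto)
  also have "\<dots> \<le> sqrt ((real \<Delta>)\<^sup>2 * fs_inner \<psi> \<psi>) * sqrt (fs_inner \<psi> \<psi>)"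
    using fs_inner_adj_op_self_le[OF assms] fs_inner_self_nonneg[of \<psi>]
    by (intro mult_right_mono real_sqrt_le_mono) auto
  also have "\<dots> = real \<Delta> * fs_inner \<psi> \<psi>"
    using fs_inner_self_nonneg[of \<psi>] by (simp add: real_sqrt_mult)
  finally show ?thesis .
qed

definition poly_op :: "real poly \<Rightarrow> ('b \<Rightarrow> real) \<Rightarrow> 'b \<Rightarrow> real" where
  "poly_op p \<psi> = fold_coeffs (\<lambda>a f x. a * \<psi> x + adj_op f x) p (\<lambda>x. 0)"

lemma poly_op_0 [simp]: "poly_op 0 \<psi> = (\<lambda>x. 0)"
  by (simp add: poly_op_def)

lemma poly_op_pCons [simp]: "poly_op (pCons a p) \<psi> = (\<lambda>x. a * \<psi> x + adj_op (poly_op p \<psi>) x)"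
  by (cases "p = 0 \<and> a = 0") (auto simp: poly_op_def)

lemma poly_op_add: "poly_op (p + q) \<psi> = (\<lambda>x. poly_op p \<psi> x + poly_op q \<psi> x)"
proof (induct p arbitrary: q rule: pCons_induct)
  case (pCons a p)
  then show ?case
    by (cases q rule: pCons_cases) (simp add: adj_op_add algebra_simps)
qed simp

lemma poly_op_smult: "poly_op (smult c p) \<psi> = (\<lambda>x. c * poly_op p \<psi> x)"
  by (induct p rule: pCons_induct) (auto simp: adj_op_scale algebra_simps)

lemma poly_op_mult: "poly_op (p * q) \<psi> = poly_op p (poly_op q \<psi>)"
  by (induct p rule: pCons_induct) (auto simp: poly_op_add poly_op_smult)

lemma poly_op_1 [simp]: "poly_op 1 \<psi> = \<psi>"
  by (simp add: one_pCons)

lemma poly_op_X: "poly_op [:0, 1:] \<psi> = adj_op \<psi>"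
  by simp

lemma poly_op_adj_op: "poly_op p (adj_op \<psi>) = adj_op (poly_op p \<psi>)"
  by (metis poly_op_X poly_op_mult mult.commute)

lemma finite_supp_poly_op: "finite (supp \<psi>) \<Longrightarrow> finite (supp (poly_op p \<psi>))"
  by (induct p rule: pCons_induct) (auto intro!: finite_supp_add finite_supp_scale finite_supp_adj_op)

lemma supp_poly_op: "supp (poly_op p \<psi>) \<subseteq> supp \<psi> \<union> {x. \<exists>y. adj x y}"
proof (induct p rule: pCons_induct)
  case (pCons a p)
  have "supp (adj_op (poly_op p \<psi>)) \<subseteq> {x. \<exists>y. adj x y}"
    by (auto simp: supp_def adj_op_def dest: sum.not_neutral_contains_not_neutral)
  then show ?case
    using supp_add[of "\<lambda>x. a * \<psi> x" "adj_op (poly_op p \<psi>)"] supp_scale[of a \<psi>] by auto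
qed simp

lemma poly_op_self_adjoint:
  assumes "finite (supp \<psi>)" "finite (supp \<xi>)"
  shows "fs_inner (poly_op p \<psi>) \<xi> = fs_inner \<psi> (poly_op p \<xi>)"
  using assms(2)
proof (induct p arbitrary: \<xi> rule: pCons_induct)
  case (pCons a p)
  have fin: "finite (supp (poly_op p \<psi>))" using finite_supp_poly_op assms(1) by blast
  have "fs_inner (poly_op (pCons a p) \<psi>) \<xi> = a * fs_inner \<psi> \<xi> + fs_inner (adj_op (poly_op p \<psi>)) \<xi>"
    by (simp add: fs_inner_add_left finite_supp_scale finite_supp_adj_op fin assms fs_inner_scale_left)
  also have "fs_inner (adj_op (poly_op p \<psi>)) \<xi> = fs_inner \<psi> (poly_op p (adj_op \<xi>))"
    using pCons fin finite_supp_adj_op by (simp add: adj_op_self_adjoint)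
  finally show ?case
    by (simp add: fs_inner_add_right fs_inner_scale_right poly_op_adj_op)
qed (simp add: fs_inner_def)

lemma poly_op_monom: "poly_op (monom 1 k) \<psi> = (adj_op ^^ k) \<psi>"
  by (induct k) (simp_all add: monom_0 monom_Suc poly_op_mult[of "[:0, 1:]", simplified])

lemma fs_inner_poly_op_linear:
  assumes "finite (supp \<psi>)"
  shows "fs_inner (poly_op [:a, c:] \<psi>) \<psi> = a * fs_inner \<psi> \<psi> + c * fs_inner (adj_op \<psi>) \<psi>"
  using assms finite_supp_adj_op[OF assms]
  by (simp add: adj_op_scale fs_inner_add_left finite_supp_scale fs_inner_scale_left)

lemma fs_inner_poly_op_quadratic:
  assumes "finite (supp \<psi>)"
  shows "fs_inner (poly_op [:a, 0, c:] \<psi>) \<psi> = a * fs_inner \<psi> \<psi> + c * fs_inner (adj_op \<psi>) (adj_op \<psi>)"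
  using assms finite_supp_adj_op[OF assms]
  by (simp add: adj_op_scale fs_inner_add_left finite_supp_scale finite_supp_adj_op
      fs_inner_scale_left adj_op_self_adjoint)

definition walks :: "nat \<Rightarrow> 'b \<Rightarrow> 'b \<Rightarrow> 'b list set" where
  "walks k a b = {ws. length ws = Suc k \<and> ws ! 0 = a \<and> ws ! k = b \<and>
     (\<forall>i<k. adj (ws ! i) (ws ! Suc i))}"

lemma walks_0: "walks 0 a b = (if a = b then {[a]} else {})"
proof -
  have "length ws = Suc 0 \<Longrightarrow> ws = [ws ! 0]" for ws :: "'b list"
    by (cases ws) auto
  then show ?thesis by (auto simp: walks_def)
qed

lemma walks_Suc: "walks (Suc k) a b = (\<lambda>(q, ws). a # ws) ` (SIGMA q:{q. adj a q}. walks k q b)"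
proof (intro set_eqI iffI)
  fix ws assume ws: "ws \<in> walks (Suc k) a b"
  then obtain ws' where ws_eq: "ws = a # ws'" and "length ws' = Suc k"
    by (cases ws) (auto simp: walks_def)
  then have "ws' \<in> walks k (ws' ! 0) b" "adj a (ws' ! 0)"
    using ws by (auto simp: walks_def)
  then show "ws \<in> (\<lambda>(q, ws). a # ws) ` (SIGMA q:{q. adj a q}. walks k q b)"
    using ws_eq by (auto intro!: image_eqI[of _ _ "(ws' ! 0, ws')"])
next
  fix ws assume "ws \<in> (\<lambda>(q, ws). a # ws) ` (SIGMA q:{q. adj a q}. walks k q b)"
  then obtain q ws' where q: "adj a q" "ws' \<in> walks k q b" "ws = a # ws'"
    by auto
  have "adj (ws ! i) (ws ! Suc i)" if "i < Suc k" for i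
    using q that by (cases i) (auto simp: walks_def)
  then show "ws \<in> walks (Suc k) a b"
    using q by (auto simp: walks_def)
qed

lemma finite_walks: "finite (walks k a b)"
  by (induct k arbitrary: a) (auto simp: walks_0 walks_Suc finite_nbhd)

lemma card_walks: "real (card (walks k a b)) = (adj_op ^^ k) (indicator {b}) a"
proof (induct k arbitrary: a)
  case (Suc k)
  have inj: "inj_on (\<lambda>(q, ws). a # ws) (SIGMA q:{q. adj a q}. walks k q b)"
    by (auto simp: inj_on_def walks_def)
  have "real (card (walks (Suc k) a b)) = real (card (SIGMA q:{q. adj a q}. walks k q b))"
    unfolding walks_Suc by (simp add: card_image[OF inj])
  also have "\<dots> = (\<Sum>q | adj a q. real (card (walks k q b)))"
    by (subst card_SigmaI) (use finite_nbhd finite_walks in auto)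
  also have "\<dots> = adj_op ((adj_op ^^ k) (indicator {b})) a"
    using Suc by (simp add: adj_op_def[of "(adj_op ^^ k) (indicator {b})"])
  finally show ?case by simp
qed (simp add: walks_0)

text \<open>For \<open>e = indicator {b}\<close> this is the moment functional of the spectral measure at \<open>b\<close>.\<close>

definition spectral_functional :: "('b \<Rightarrow> real) \<Rightarrow> real poly \<Rightarrow> real" where
  "spectral_functional e p = fs_inner (poly_op p e) e"

lemma spectral_functional_add:
  "finite (supp e) \<Longrightarrow> spectral_functional e (p + q) = spectral_functional e p + spectral_functional e q"
  by (simp add: spectral_functional_def poly_op_add fs_inner_add_left finite_supp_poly_op)

lemma spectral_functional_smult: "spectral_functional e (smult c p) = c * spectral_functional e p"
  by (simp add: spectral_functional_def poly_op_smult fs_inner_scale_left)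

lemma spectral_functional_mult:
  "finite (supp e) \<Longrightarrow> spectral_functional e (p * q) = fs_inner (poly_op p e) (poly_op q e)"
  unfolding spectral_functional_def poly_op_mult
  by (subst poly_op_self_adjoint) (auto simp: finite_supp_poly_op fs_inner_commute)

lemma spectral_functional_0 [simp]: "spectral_functional e 0 = 0"
  by (simp add: spectral_functional_def)

lemma spectral_functional_sum:
  "finite (supp e) \<Longrightarrow> spectral_functional e (\<Sum>i\<in>I. f i) = (\<Sum>i\<in>I. spectral_functional e (f i))"
  by (induct I rule: infinite_finite_induct) (auto simp: spectral_functional_add)

lemma spectral_functional_monom:
  "spectral_functional (indicator {b}) (monom 1 k) = real (card (walks k b b))"
  using finite_supp_poly_op[of "indicator {b}" "monom 1 k"]
  by (simp add: spectral_functional_def poly_op_monom card_walks fs_inner_indicator_right)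

lemma spectral_functional_eq_integral:
  assumes "finite (supp e)"
    and "\<And>k. integrable M (\<lambda>x. x ^ k)" "\<And>k. (\<integral>x. x ^ k \<partial>M) = spectral_functional e (monom 1 k)"
  shows "spectral_functional e p = (\<integral>x. poly p x \<partial>M)"
proof -
  have "spectral_functional e p = spectral_functional e (\<Sum>i\<le>degree p. smult (coeff p i) (monom 1 i))"
    by (simp add: smult_monom poly_as_sum_of_monoms)
  then show ?thesis
    using assms
    by (simp add: spectral_functional_sum spectral_functional_smult integral_poly_eq_moments)
qed

text \<open>Positivity on the Bernstein basis of \<open>[-\<Delta>, \<Delta>]\<close> reduces, by writing
  \<open>Y^j (1-Y)^r = t s^2\<close> with \<open>t \<in> {1, Y, 1-Y, Y(1-Y)}\<close>, to the norm bound \<open>\<parallel>A\<parallel> \<le> \<Delta>\<close>.\<close>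

lemma fs_inner_poly_op_bernstein_factor_nonneg:
  assumes fin: "finite (supp \<psi>)" and \<Delta>: "0 < \<Delta>"
    and t: "t \<in> {1, unit_coord \<Delta>, 1 - unit_coord \<Delta>, unit_coord \<Delta> * (1 - unit_coord \<Delta>)}"
  shows "0 \<le> fs_inner (poly_op t \<psi>) \<psi>"
proof -
  define \<beta> where "\<beta> = real \<Delta>"
  have \<beta>: "0 < \<beta>" using \<Delta> by (simp add: \<beta>_def)
  have norm: "\<bar>fs_inner (adj_op \<psi>) \<psi>\<bar> \<le> \<beta> * fs_inner \<psi> \<psi>"
    using abs_fs_inner_adj_op_le[OF fin] by (simp add: \<beta>_def)
  have Y: "unit_coord \<beta> = [:1/2, 1/(2*\<beta>):]" and Z: "1 - unit_coord \<beta> = [:1/2, -1/(2*\<beta>):]"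
    by (simp_all add: unit_coord_def one_pCons)
  have "0 \<le> fs_inner (poly_op [:1/2, c/(2*\<beta>):] \<psi>) \<psi>" if "\<bar>c\<bar> = 1" for c
  proof -
    have "\<bar>c/(2*\<beta>) * fs_inner (adj_op \<psi>) \<psi>\<bar> = \<bar>fs_inner (adj_op \<psi>) \<psi>\<bar> / (2*\<beta>)"
      using \<beta> that by (simp add: abs_mult)
    also have "\<dots> \<le> 1/2 * fs_inner \<psi> \<psi>"
      using norm \<beta> by (simp add: divide_le_eq mult.commute)
    finally have "\<bar>c/(2*\<beta>) * fs_inner (adj_op \<psi>) \<psi>\<bar> \<le> 1/2 * fs_inner \<psi> \<psi>" .
    then show ?thesis
      unfolding fs_inner_poly_op_linear[OF fin] using abs_le_D2 by fastforce
  qed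
  note linear = this
  have linear_Y: "0 \<le> fs_inner (poly_op (unit_coord \<beta>) \<psi>) \<psi>"
    using linear[of 1] unfolding Y by simp
  have linear_Z: "0 \<le> fs_inner (poly_op (1 - unit_coord \<beta>) \<psi>) \<psi>"
    using linear[of "-1"] unfolding Z by simp
  have "unit_coord \<beta> * (1 - unit_coord \<beta>) = [:1/4, 0, -1/(4*\<beta>\<^sup>2):]"
    using \<beta> by (subst Z, subst Y) (simp add: power2_eq_square field_simps)
  then have quadratic: "fs_inner (poly_op (unit_coord \<beta> * (1 - unit_coord \<beta>)) \<psi>) \<psi>
      = 1/4 * fs_inner \<psi> \<psi> - 1/(4*\<beta>\<^sup>2) * fs_inner (adj_op \<psi>) (adj_op \<psi>)"
    by (simp only: fs_inner_poly_op_quadratic[OF fin])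
  have "1/(4*\<beta>\<^sup>2) * fs_inner (adj_op \<psi>) (adj_op \<psi>) \<le> 1/(4*\<beta>\<^sup>2) * (\<beta>\<^sup>2 * fs_inner \<psi> \<psi>)"
    using fs_inner_adj_op_self_le[OF fin] by (intro mult_left_mono) (auto simp: \<beta>_def)
  then have "0 \<le> fs_inner (poly_op (unit_coord \<beta> * (1 - unit_coord \<beta>)) \<psi>) \<psi>"
    using \<beta> unfolding quadratic by simp
  then show ?thesis
    using t linear_Y linear_Z fs_inner_self_nonneg[of \<psi>] by (auto simp: \<beta>_def)
qed

lemma spectral_functional_bernstein_nonneg:
  assumes fin: "finite (supp e)" and \<Delta>: "0 < \<Delta>"
  shows "0 \<le> spectral_functional e (unit_coord \<Delta> ^ j * (1 - unit_coord \<Delta>) ^ r)"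
proof -
  define Y Z where "Y = unit_coord \<Delta>" and "Z = 1 - unit_coord \<Delta>"
  define s where "s = Y ^ (j div 2) * Z ^ (r div 2)"
  define t where "t = Y ^ (j mod 2) * Z ^ (r mod 2)"
  have split: "x ^ n = x ^ (n mod 2) * x ^ (n div 2) * x ^ (n div 2)" for x :: "real poly" and n
  proof -
    have "n = n mod 2 + n div 2 + n div 2" by arith
    then show ?thesis by (metis power_add)
  qed
  have "Y ^ j * Z ^ r = (t * s) * s"
    unfolding s_def t_def by (subst split[of Y j], subst split[of Z r]) (simp add: mult_ac)
  then have "spectral_functional e (Y ^ j * Z ^ r) = fs_inner (poly_op t (poly_op s e)) (poly_op s e)"
    by (simp add: spectral_functional_mult[OF fin] poly_op_mult)
  moreover have "t \<in> {1, Y, Z, Y * Z}"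
    unfolding t_def using mod2_eq_if[of j] mod2_eq_if[of r] by auto
  ultimately show ?thesis
    using fs_inner_poly_op_bernstein_factor_nonneg[OF finite_supp_poly_op[OF fin] \<Delta>]
    by (simp add: Y_def Z_def)
qed

theorem spectral_measure_exists:
  assumes "0 < \<Delta>"
  obtains M where "real_distribution M" "AE x in M. x \<in> {-real \<Delta>..real \<Delta>}"
    "\<And>k. integrable M (\<lambda>x. x ^ k)"
    "\<And>k. (\<integral>x. x ^ k \<partial>M) = spectral_functional (indicator {b}) (monom 1 k)"
proof -
  interpret hausdorff_functional "spectral_functional (indicator {b})" "real \<Delta>"
  proof
    show "spectral_functional (indicator {b}) 1 = 1"
      by (simp add: spectral_functional_def fs_inner_indicator_right)
  qed (use assms in \<open>simp_all add: spectral_functional_add spectral_functional_smult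
        spectral_functional_bernstein_nonneg\<close>)
  show ?thesis
    using moment_measure_exists that by blast
qed

end


section \<open>The path tree and the matching measure\<close>

lemma (in real_distribution) even_moment_le:
  assumes "AE x in M. x \<in> {-\<beta>..\<beta>}" "integrable M (\<lambda>x. x ^ (2 * k))"
  shows "(\<integral>x. x ^ (2 * k) \<partial>M) \<le> \<beta> ^ (2 * k)"
proof -
  have "(\<integral>x. x ^ (2 * k) \<partial>M) \<le> (\<integral>x. \<beta> ^ (2 * k) \<partial>M)"
  proof (rule integral_mono_AE)
    show "AE x in M. x ^ (2 * k) \<le> \<beta> ^ (2 * k)"
      using assms(1)
    proof eventually_elim
      case (elim x)
      then have "\<bar>x\<bar> ^ (2 * k) \<le> \<beta> ^ (2 * k)"
        by (intro power_mono) auto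
      then show ?case
        by (simp add: power_even_abs)
    qed
  qed (use assms(2) in auto)
  then show ?thesis
    using prob_space by (simp add: space_eq_univ)
qed

lemma matching_measure_eqI:
  assumes M: "real_distribution M" and supp: "AE x in M. x \<in> {-\<beta>..\<beta>}" and "0 \<le> \<beta>"
    and int: "\<And>k. integrable M (\<lambda>x. x ^ k)"
    and moments: "\<And>k. (\<integral>x. x ^ k \<partial>M) = real (closed_walks_root V E u k)"
  shows "matching_measure V E u = M"
  unfolding matching_measure_def
proof (rule the_equality)
  interpret M: real_distribution M by (rule M)
  show "sets M = sets borel \<and> prob_space M \<and>
      (\<forall>k. integrable M (\<lambda>x. x ^ k) \<and> (\<integral>x. x ^ k \<partial>M) = real (closed_walks_root V E u k))"
    using int moments M.prob_space_axioms by simp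
  fix \<mu> assume \<mu>: "sets \<mu> = sets borel \<and> prob_space \<mu> \<and>
      (\<forall>k. integrable \<mu> (\<lambda>x. x ^ k) \<and> (\<integral>x. x ^ k \<partial>\<mu>) = real (closed_walks_root V E u k))"
  then have rd: "real_distribution \<mu>"
    by (auto simp: real_distribution_def real_distribution_axioms_def)
  have "AE x in \<mu>. x \<in> {-\<beta>..\<beta>}"
    by (rule real_distribution.AE_Icc_if_even_moments_le[OF rd \<open>0 \<le> \<beta>\<close>])
       (use \<mu> moments M.even_moment_le[OF supp int] in auto)
  then show "\<mu> = M"
    by (rule measure_eq_if_moments_eq[OF rd M _ supp]) (use \<mu> int moments in auto)
qed

lemma path_tree_adj_sym: "path_tree_adj V E u p q \<Longrightarrow> path_tree_adj V E u q p"
  unfolding path_tree_adj_def by blast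

lemma path_tree_adj_cases:
  assumes "path_tree_adj V E u p q"
  shows "q \<in> insert (butlast p) ((\<lambda>w. p @ [w]) ` nbrs V E (last p))"
proof -
  from assms have pp: "is_path_from V E u p" and pq: "is_path_from V E u q"
    and c: "(\<exists>v. q = p @ [v]) \<or> (\<exists>v. p = q @ [v])"
    by (auto simp: path_tree_adj_def)
  have pne: "p \<noteq> []" using pp by (simp add: is_path_from_def)
  show ?thesis
  proof (cases "\<exists>v. q = p @ [v]")
    case True
    then obtain v where q: "q = p @ [v]" by blast
    have "Suc (length p - 1) < length q"
      using q pne by simp
    then have "E (q ! (length p - 1)) (q ! Suc (length p - 1))"
      using pq by (simp add: is_path_from_def)
    moreover have "q ! (length p - 1) = last p" "q ! Suc (length p - 1) = v"
      using q pne by (simp_all add: nth_append last_conv_nth)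
    ultimately have "E (last p) v"
      by simp
    moreover have "v \<in> V" using pq q by (auto simp: is_path_from_def)
    ultimately show ?thesis using q by (auto simp: nbrs_def)
  next
    case False
    then show ?thesis using c by auto
  qed
qed

lemma bounded_degree_graph_path_tree:
  assumes "max_degree_le V E D"
  shows "bounded_degree_graph (path_tree_adj V E u) (Suc D)"
proof
  fix p
  define C where "C = (if is_path_from V E u p
    then insert (butlast p) ((\<lambda>w. p @ [w]) ` nbrs V E (last p)) else {})"
  have sub: "{q. path_tree_adj V E u p q} \<subseteq> C"
  proof
    fix q assume "q \<in> {q. path_tree_adj V E u p q}"
    then show "q \<in> C"
      using path_tree_adj_cases[of V E u p q] by (auto simp: C_def path_tree_adj_def)
  qed
  have C: "finite C \<and> card C \<le> Suc D"
  proof (cases "is_path_from V E u p")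
    case True
    then have "last p \<in> V" by (auto simp: is_path_from_def)
    then have "finite (nbrs V E (last p))" "card (nbrs V E (last p)) \<le> D"
      using assms by (auto simp: max_degree_le_def)
    then show ?thesis
      using True card_image_le[of "nbrs V E (last p)" "\<lambda>w. p @ [w]"]
      by (auto simp: C_def card_insert_if)
  qed (simp add: C_def)
  show "finite {q. path_tree_adj V E u p q}"
    using finite_subset[OF sub] C by blast
  show "card {q. path_tree_adj V E u p q} \<le> Suc D"
    using card_mono[OF _ sub] C by (blast intro: le_trans)
qed (rule path_tree_adj_sym)

theorem matching_measure_spectral:
  assumes "max_degree_le V E D"
  shows "real_distribution (matching_measure V E u)"
    and "AE x in matching_measure V E u. x \<in> {-real (Suc D)..real (Suc D)}"
    and "integrable (matching_measure V E u) (\<lambda>x. x ^ k)"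
    and "(\<integral>x. x ^ k \<partial>matching_measure V E u)
      = bounded_degree_graph.spectral_functional (path_tree_adj V E u) (indicator {[u]}) (monom 1 k)"
proof -
  interpret T: bounded_degree_graph "path_tree_adj V E u" "Suc D"
    by (rule bounded_degree_graph_path_tree[OF assms])
  have closed_walks: "real (closed_walks_root V E u k) = T.spectral_functional (indicator {[u]}) (monom 1 k)"
    for k by (simp add: T.spectral_functional_monom closed_walks_root_def T.walks_def)
  obtain M where M: "real_distribution M" "AE x in M. x \<in> {-real (Suc D)..real (Suc D)}"
    "\<And>k. integrable M (\<lambda>x. x ^ k)"
    "\<And>k. (\<integral>x. x ^ k \<partial>M) = T.spectral_functional (indicator {[u]}) (monom 1 k)"
    using T.spectral_measure_exists[of "[u]"] by auto
  have "matching_measure V E u = M"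
    by (rule matching_measure_eqI[OF M(1,2)]) (use M closed_walks in auto)
  then show "real_distribution (matching_measure V E u)"
    and "AE x in matching_measure V E u. x \<in> {-real (Suc D)..real (Suc D)}"
    and "integrable (matching_measure V E u) (\<lambda>x. x ^ k)"
    and "(\<integral>x. x ^ k \<partial>matching_measure V E u) = T.spectral_functional (indicator {[u]}) (monom 1 k)"
    using M by auto
qed


section \<open>Splitting the path tree at the root\<close>

lemma max_degree_le_Diff: "max_degree_le V E D \<Longrightarrow> max_degree_le (V - {u}) E D"
proof -
  assume a: "max_degree_le V E D"
  show ?thesis unfolding max_degree_le_def
  proof
    fix x assume x: "x \<in> V - {u}"
    have sub: "nbrs (V - {u}) E x \<subseteq> nbrs V E x" by (auto simp: nbrs_def)
    have "finite (nbrs V E x)" "card (nbrs V E x) \<le> D" using a x by (auto simp: max_degree_le_def)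
    then show "finite (nbrs (V - {u}) E x) \<and> card (nbrs (V - {u}) E x) \<le> D"
      using sub by (meson card_mono finite_subset order_trans)
  qed
qed

lemma is_path_from_Cons:
  assumes "u \<in> V" "p \<noteq> []"
  shows "is_path_from V E u (u # p) \<longleftrightarrow> hd p \<in> nbrs V E u \<and> is_path_from (V - {u}) E (hd p) p"
proof -
  have edges: "(\<forall>i. Suc i < length (u # p) \<longrightarrow> E ((u # p) ! i) ((u # p) ! Suc i)) \<longleftrightarrow>
      E u (hd p) \<and> (\<forall>i. Suc i < length p \<longrightarrow> E (p ! i) (p ! Suc i))"
  proof
    assume h: "\<forall>i. Suc i < length (u # p) \<longrightarrow> E ((u # p) ! i) ((u # p) ! Suc i)"
    have "E u (hd p)" using h[rule_format, of 0] assms(2) by (simp add: hd_conv_nth)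
    moreover have "\<forall>i. Suc i < length p \<longrightarrow> E (p ! i) (p ! Suc i)"
      using h by (metis Suc_less_eq length_Cons nth_Cons_Suc)
    ultimately show "E u (hd p) \<and> (\<forall>i. Suc i < length p \<longrightarrow> E (p ! i) (p ! Suc i))" ..
  next
    assume h: "E u (hd p) \<and> (\<forall>i. Suc i < length p \<longrightarrow> E (p ! i) (p ! Suc i))"
    show "\<forall>i. Suc i < length (u # p) \<longrightarrow> E ((u # p) ! i) ((u # p) ! Suc i)"
    proof (intro allI impI)
      fix i assume "Suc i < length (u # p)"
      then show "E ((u # p) ! i) ((u # p) ! Suc i)"
        using h assms(2) by (cases i) (auto simp: hd_conv_nth)
    qed
  qed
  show ?thesis
    unfolding is_path_from_def nbrs_def edges
    using assms by (cases p) auto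
qed

lemma is_path_from_single [simp]: "is_path_from V E u [u] \<longleftrightarrow> u \<in> V"
  by (simp add: is_path_from_def)

text \<open>Removing the root \<open>[u]\<close> from \<open>T(G, u)\<close> leaves one copy of \<open>T(G - u, v)\<close> for every
  neighbour \<open>v\<close> of \<open>u\<close>, namely the paths \<open>u # p\<close> with \<open>p\<close> a path from \<open>v\<close> in \<open>G - u\<close>.\<close>

locale rooted_graph =
  fixes V :: "'a set" and E :: "'a \<Rightarrow> 'a \<Rightarrow> bool" and u :: 'a and D :: nat
  assumes simple: "simple_graph V E" and degree: "max_degree_le V E D" and root: "u \<in> V"
begin

sublocale T: bounded_degree_graph "path_tree_adj V E u" "Suc D"
  by (rule bounded_degree_graph_path_tree[OF degree])

sublocale B: bounded_degree_graph "path_tree_adj (V - {u}) E v" "Suc D" for v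
  by (rule bounded_degree_graph_path_tree[OF max_degree_le_Diff[OF degree]])

lemma finite_root_nbrs: "finite (nbrs V E u)"
  using degree root by (simp add: max_degree_le_def)

lemma root_nbrsD: "v \<in> nbrs V E u \<Longrightarrow> v \<in> V \<and> v \<noteq> u \<and> E u v"
  using simple by (auto simp: nbrs_def simple_graph_def)

definition branch_vec :: "real poly \<Rightarrow> 'a \<Rightarrow> 'a list \<Rightarrow> real" where
  "branch_vec f v = B.poly_op v f (indicator {[v]})"

definition branch_functional :: "'a \<Rightarrow> real poly \<Rightarrow> real" where
  "branch_functional v = B.spectral_functional v (indicator {[v]})"

definition root_functional :: "real poly \<Rightarrow> real" where
  "root_functional = T.spectral_functional (indicator {[u]})"

text \<open>\<open>lifted_branches f\<close> places \<open>f(A\<^sub>v) e\<^sub>v\<close> on the copy of \<open>T(G - u, v)\<close> below \<open>[u, v]\<close>,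
  for every neighbour \<open>v\<close>.\<close>

definition lifted_branches :: "real poly \<Rightarrow> 'a list \<Rightarrow> real" where
  "lifted_branches f q = (if q \<noteq> [] \<and> hd q = u \<and> tl q \<noteq> [] \<and> hd (tl q) \<in> nbrs V E u
     then branch_vec f (hd (tl q)) (tl q) else 0)"

lemma is_path_from_branch_root: "v \<in> nbrs V E u \<Longrightarrow> is_path_from (V - {u}) E v [v]"
  using root_nbrsD by (simp add: is_path_from_def)

lemma supp_branch_vec:
  assumes "v \<in> nbrs V E u"
  shows "supp (branch_vec f v) \<subseteq> {p. is_path_from (V - {u}) E v p}"
proof -
  have "supp (branch_vec f v) \<subseteq> supp (indicator {[v]}) \<union> {p. \<exists>q. path_tree_adj (V - {u}) E v p q}"
    unfolding branch_vec_def by (rule B.supp_poly_op)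
  also have "\<dots> \<subseteq> {p. is_path_from (V - {u}) E v p}"
    using is_path_from_branch_root[OF assms] by (auto simp:  path_tree_adj_def)
  finally show ?thesis .
qed

lemma finite_supp_branch_vec: "finite (supp (branch_vec f v))"
  unfolding branch_vec_def by (rule B.finite_supp_poly_op) simp

lemma lifted_branches_Cons: "p \<noteq> [] \<Longrightarrow> hd p \<in> nbrs V E u \<Longrightarrow> lifted_branches f (u # p) = branch_vec f (hd p) p"
  by (simp add: lifted_branches_def)

lemma lifted_branches_nonzeroD:
  assumes "lifted_branches f q \<noteq> 0"
  shows "\<exists>p. q = u # p \<and> p \<noteq> [] \<and> hd p \<in> nbrs V E u \<and> is_path_from (V - {u}) E (hd p) p \<and> p \<in> supp (branch_vec f (hd p))"
proof -
  from assms have c: "q \<noteq> [] \<and> hd q = u \<and> tl q \<noteq> [] \<and> hd (tl q) \<in> nbrs V E u"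
    and "branch_vec f (hd (tl q)) (tl q) \<noteq> 0"
    by (auto simp: lifted_branches_def split: if_splits)
  then have "tl q \<in> supp (branch_vec f (hd (tl q)))" by (simp add: supp_def)
  moreover then have "is_path_from (V - {u}) E (hd (tl q)) (tl q)"
    using supp_branch_vec[of "hd (tl q)" f] c by auto
  moreover have "q = u # tl q" using c by (cases q) auto
  ultimately show ?thesis using c by blast
qed

lemma supp_lifted_branches: "supp (lifted_branches f) \<subseteq> (\<Union>v\<in>nbrs V E u. (Cons u) ` supp (branch_vec f v))"
proof
  fix q assume "q \<in> supp (lifted_branches f)"
  then have "lifted_branches f q \<noteq> 0" by (simp add: supp_def)
  from lifted_branches_nonzeroD[OF this] obtain p where "q = u # p" "hd p \<in> nbrs V E u" "p \<in> supp (branch_vec f (hd p))" by blast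
  then show "q \<in> (\<Union>v\<in>nbrs V E u. (Cons u) ` supp (branch_vec f v))" by blast
qed

lemma finite_supp_lifted_branches: "finite (supp (lifted_branches f))"
  by (rule finite_subset[OF supp_lifted_branches]) (auto intro: finite_root_nbrs finite_supp_branch_vec)

lemma lifted_branches_root[simp]: "lifted_branches f [u] = 0"
  by (simp add: lifted_branches_def)

lemma path_tree_nbrs_root: "{q. path_tree_adj V E u [u] q} = (\<lambda>v. [u, v]) ` nbrs V E u"
proof (intro set_eqI iffI)
  fix q assume "q \<in> {q. path_tree_adj V E u [u] q}"
  then have pq: "is_path_from V E u q" and c: "(\<exists>w. q = [u] @ [w]) \<or> (\<exists>w. [u] = q @ [w])"
    by (auto simp: path_tree_adj_def)
  have "q \<noteq> []" using pq by (simp add: is_path_from_def)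
  then obtain w where q: "q = [u, w]" using c by (auto simp: Cons_eq_append_conv)
  then have "w \<in> nbrs V E u" using pq is_path_from_Cons[OF root, of "[w]"] by simp
  then show "q \<in> (\<lambda>v. [u, v]) ` nbrs V E u" using q by blast
next
  fix q assume "q \<in> (\<lambda>v. [u, v]) ` nbrs V E u"
  then obtain v where v: "v \<in> nbrs V E u" and q: "q = [u, v]" by blast
  have "is_path_from V E u [u, v]"
    using is_path_from_Cons[OF root, of "[v]"] v is_path_from_branch_root[OF v] by simp
  then show "q \<in> {q. path_tree_adj V E u [u] q}"
    using q root by (auto simp: path_tree_adj_def is_path_from_single)
qed

lemma path_tree_nbrs_Cons_subset:
  assumes v: "v \<in> nbrs V E u" and p: "is_path_from (V - {u}) E v p"
  shows "{q. path_tree_adj V E u (u # p) q}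
    \<subseteq> Cons u ` {p'. path_tree_adj (V - {u}) E v p p'} \<union> (if p = [v] then {[u]} else {})"
proof
  fix q assume "q \<in> {q. path_tree_adj V E u (u # p) q}"
  then have pq: "is_path_from V E u q" and c: "(\<exists>w. q = (u # p) @ [w]) \<or> (\<exists>w. u # p = q @ [w])"
    by (auto simp: path_tree_adj_def)
  have pne: "p \<noteq> []" and hp: "hd p = v" using p by (auto simp: is_path_from_def)
  show "q \<in> Cons u ` {p'. path_tree_adj (V - {u}) E v p p'} \<union> (if p = [v] then {[u]} else {})"
  proof (cases "\<exists>w. q = (u # p) @ [w]")
    case True
    then obtain w where q: "q = u # (p @ [w])" by auto
    have "is_path_from (V - {u}) E v (p @ [w])"
      using pq is_path_from_Cons[OF root, of "p @ [w]"] q pne hp by simp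
    then have "path_tree_adj (V - {u}) E v p (p @ [w])"
      using p by (auto simp: path_tree_adj_def)
    then show ?thesis using q by blast
  next
    case False
    then obtain w where e: "u # p = q @ [w]" using c by blast
    have "q \<noteq> []" using pq by (simp add: is_path_from_def)
    then obtain q' where q: "q = u # q'" and pe: "p = q' @ [w]"
      using e by (cases q) auto
    show ?thesis
    proof (cases "q' = []")
      case True
      then show ?thesis using q pe hp by simp
    next
      case False
      have "is_path_from (V - {u}) E v q'"
        using pq is_path_from_Cons[OF root False] q pe hp False by simp
      then have "path_tree_adj (V - {u}) E v p q'"
        using p pe by (auto simp: path_tree_adj_def)
      then show ?thesis using q by blast
    qed
  qed
qed

lemma path_tree_nbrs_Cons:
  assumes v: "v \<in> nbrs V E u" and p: "is_path_from (V - {u}) E v p"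
  shows "{q. path_tree_adj V E u (u # p) q} =
    Cons u ` {p'. path_tree_adj (V - {u}) E v p p'} \<union> (if p = [v] then {[u]} else {})"
proof (rule equalityI[OF path_tree_nbrs_Cons_subset[OF assms]], rule subsetI)
  have pne: "p \<noteq> []" and hp: "hd p = v" using p by (auto simp: is_path_from_def)
  then have pu: "is_path_from V E u (u # p)"
    using is_path_from_Cons[OF root pne] v p by simp
  fix q assume "q \<in> Cons u ` {p'. path_tree_adj (V - {u}) E v p p'} \<union> (if p = [v] then {[u]} else {})"
  then consider p' where "q = u # p'" "path_tree_adj (V - {u}) E v p p'" | "p = [v]" "q = [u]"
    by (auto split: if_splits)
  then show "q \<in> {q. path_tree_adj V E u (u # p) q}"
  proof cases
    case 1
    then have pp': "is_path_from (V - {u}) E v p'" and c: "(\<exists>w. p' = p @ [w]) \<or> (\<exists>w. p = p' @ [w])"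
      by (auto simp: path_tree_adj_def)
    moreover have "p' \<noteq> []" "hd p' = v" using pp' by (auto simp: is_path_from_def)
    ultimately have "is_path_from V E u (u # p')"
      using is_path_from_Cons[OF root, of p'] v by simp
    then show ?thesis using 1 pu c by (auto simp: path_tree_adj_def)
  next
    case 2
    then show ?thesis using pu root by (auto simp: path_tree_adj_def)
  qed
qed

lemma branch_vec_X: "branch_vec ([:0, 1:] * f) v = B.adj_op v (branch_vec f v)"
  by (simp only: branch_vec_def B.poly_op_mult B.poly_op_X)

lemma branch_vec_add: "branch_vec (f + g) v p = branch_vec f v p + branch_vec g v p"
  by (simp add: branch_vec_def B.poly_op_add)

lemma branch_vec_smult: "branch_vec (smult c f) v p = c * branch_vec f v p"
  by (simp add: branch_vec_def B.poly_op_smult)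

lemma lifted_branches_add: "lifted_branches (f + g) = (\<lambda>q. lifted_branches f q + lifted_branches g q)"
  by (auto simp: lifted_branches_def branch_vec_add fun_eq_iff)

lemma lifted_branches_smult: "lifted_branches (smult c f) = (\<lambda>q. c * lifted_branches f q)"
  by (auto simp: lifted_branches_def branch_vec_smult fun_eq_iff)

lemma branch_vec_root: "branch_vec f v [v] = branch_functional v f"
  using finite_supp_branch_vec[of f v]
  by (simp add: branch_functional_def B.spectral_functional_def branch_vec_def fs_inner_indicator_right)

lemma fs_inner_branch_vec: "fs_inner (branch_vec f v) (branch_vec g v) = branch_functional v (f * g)"
  by (simp add: branch_functional_def B.spectral_functional_mult branch_vec_def)

lemma path_tree_vertex_cases:
  obtains "q = [u]"
    | p where "q = u # p" "p \<noteq> []" "hd p \<in> nbrs V E u" "is_path_from (V - {u}) E (hd p) p"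
    | "\<not> is_path_from V E u q"
proof (cases "q = [u] \<or> \<not> is_path_from V E u q")
  case False
  then have "q \<noteq> []" "hd q = u" by (auto simp: is_path_from_def)
  then obtain p where q: "q = u # p" by (cases q) auto
  with False have "p \<noteq> []" by auto
  with False q is_path_from_Cons[OF root this] show ?thesis
    using that(2) by blast
qed (use that in blast)

lemma adj_op_lifted_branches_root:
  "T.adj_op (lifted_branches f) [u] = (\<Sum>v\<in>nbrs V E u. branch_functional v f)"
proof -
  have "inj_on (\<lambda>v. [u, v]) (nbrs V E u)" by (auto simp: inj_on_def)
  then have "T.adj_op (lifted_branches f) [u] = (\<Sum>v\<in>nbrs V E u. lifted_branches f [u, v])"
    by (simp add: T.adj_op_def path_tree_nbrs_root sum.reindex)
  then show ?thesis
    by (simp add: lifted_branches_Cons branch_vec_root)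
qed

lemma adj_op_lifted_branches_Cons:
  assumes "p \<noteq> []" "hd p \<in> nbrs V E u" "is_path_from (V - {u}) E (hd p) p"
  shows "T.adj_op (lifted_branches f) (u # p) = lifted_branches ([:0, 1:] * f) (u # p)"
proof -
  define v where "v = hd p"
  have v: "v \<in> nbrs V E u" and pv: "is_path_from (V - {u}) E v p"
    using assms by (auto simp: v_def)
  define children where "children = {p'. path_tree_adj (V - {u}) E v p p'}"
  have "[] \<notin> children"
    by (auto simp: children_def path_tree_adj_def is_path_from_def)
  then have "T.adj_op (lifted_branches f) (u # p) = (\<Sum>q\<in>Cons u ` children. lifted_branches f q)"
    using B.finite_nbhd[of v p]
    by (simp add: T.adj_op_def path_tree_nbrs_Cons[OF v pv] children_def[symmetric] sum.insert_if)
  also have "\<dots> = (\<Sum>p'\<in>children. branch_vec f v p')"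
  proof (simp add: sum.reindex, intro sum.cong refl)
    fix p' assume "p' \<in> children"
    then have "p' \<noteq> []" "hd p' = v"
      by (auto simp: children_def path_tree_adj_def is_path_from_def)
    then show "lifted_branches f (u # p') = branch_vec f v p'"
      using v by (simp add: lifted_branches_Cons)
  qed
  also have "\<dots> = B.adj_op v (branch_vec f v) p"
    by (simp add: B.adj_op_def children_def)
  also have "\<dots> = branch_vec ([:0, 1:] * f) v p"
    by (simp only: branch_vec_X)
  finally show ?thesis
    using assms by (simp add: lifted_branches_Cons v_def)
qed

lemma adj_op_lifted_branches_outside:
  assumes "\<not> is_path_from V E u q"
  shows "T.adj_op (lifted_branches f) q = 0" "lifted_branches ([:0, 1:] * f) q = 0"
proof -
  have "{q'. path_tree_adj V E u q q'} = {}"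
    using assms by (auto simp: path_tree_adj_def)
  then show "T.adj_op (lifted_branches f) q = 0"
    by (simp add: T.adj_op_def)
  show "lifted_branches ([:0, 1:] * f) q = 0"
  proof (rule ccontr)
    assume "lifted_branches ([:0, 1:] * f) q \<noteq> 0"
    from lifted_branches_nonzeroD[OF this] obtain p where "q = u # p" "p \<noteq> []" "hd p \<in> nbrs V E u"
      "is_path_from (V - {u}) E (hd p) p" by blast
    then show False
      using assms is_path_from_Cons[OF root] by simp
  qed
qed

text \<open>Lifting commutes with multiplication by \<open>x\<close> except at the root, where the branches
  contribute the sum of their functionals; through this defect the atoms of the branch
  measures at \<open>\<theta>\<close> enter.\<close>

lemma adj_op_lifted_branches:
  "T.adj_op (lifted_branches f) = (\<lambda>q. lifted_branches ([:0, 1:] * f) q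
     + (\<Sum>v\<in>nbrs V E u. branch_functional v f) * indicator {[u]} q)"
proof
  fix q
  show "T.adj_op (lifted_branches f) q = lifted_branches ([:0, 1:] * f) q
     + (\<Sum>v\<in>nbrs V E u. branch_functional v f) * indicator {[u]} q"
  proof (cases q rule: path_tree_vertex_cases)
    case 3
    moreover have "q \<noteq> [u]"
      using 3 root by auto
    ultimately show ?thesis
      using adj_op_lifted_branches_outside[OF 3, of f] by simp
  qed (simp_all add: adj_op_lifted_branches_root adj_op_lifted_branches_Cons)
qed


lemma fs_inner_lifted_branches: "fs_inner (lifted_branches f) (lifted_branches g) = (\<Sum>v\<in>nbrs V E u. branch_functional v (f * g))"
proof -
  define F where "F v = supp (branch_vec f v)" for v
  have finF: "finite (F v)" for v by (simp add: F_def finite_supp_branch_vec)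
  have "fs_inner (lifted_branches f) (lifted_branches g) = (\<Sum>q\<in>(\<Union>v\<in>nbrs V E u. (Cons u) ` F v). lifted_branches f q * lifted_branches g q)"
    by (rule fs_inner_eq_sum) (use supp_lifted_branches finite_root_nbrs finF in \<open>auto simp: F_def\<close>)
  also have "\<dots> = (\<Sum>v\<in>nbrs V E u. \<Sum>q\<in>(Cons u) ` F v. lifted_branches f q * lifted_branches g q)"
  proof (rule sum.UNION_disjoint)
    show "finite (nbrs V E u)" by (rule finite_root_nbrs)
    show "\<forall>v\<in>nbrs V E u. finite ((Cons u) ` F v)" using finF by auto
    show "\<forall>v\<in>nbrs V E u. \<forall>w\<in>nbrs V E u. v \<noteq> w \<longrightarrow> (Cons u) ` F v \<inter> (Cons u) ` F w = {}"
    proof (intro ballI impI)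
      fix v w assume v: "v \<in> nbrs V E u" and w: "w \<in> nbrs V E u" and vw: "v \<noteq> w"
      have "hd p = v" if "p \<in> F v" for p using supp_branch_vec[OF v] that by (auto simp: F_def is_path_from_def)
      moreover have "hd p = w" if "p \<in> F w" for p using supp_branch_vec[OF w] that by (auto simp: F_def is_path_from_def)
      ultimately show "(Cons u) ` F v \<inter> (Cons u) ` F w = {}" using vw by auto
    qed
  qed
  also have "\<dots> = (\<Sum>v\<in>nbrs V E u. \<Sum>p\<in>F v. branch_vec f v p * branch_vec g v p)"
  proof (rule sum.cong[OF refl])
    fix v assume v: "v \<in> nbrs V E u"
    have "(\<Sum>q\<in>(Cons u) ` F v. lifted_branches f q * lifted_branches g q) = (\<Sum>p\<in>F v. lifted_branches f (u # p) * lifted_branches g (u # p))"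
      by (simp add: sum.reindex)
    also have "\<dots> = (\<Sum>p\<in>F v. branch_vec f v p * branch_vec g v p)"
    proof (rule sum.cong[OF refl])
      fix p assume "p \<in> F v"
      then have "is_path_from (V - {u}) E v p" using supp_branch_vec[OF v] by (auto simp: F_def)
      then have "p \<noteq> []" "hd p = v" by (auto simp: is_path_from_def)
      then show "lifted_branches f (u # p) * lifted_branches g (u # p) = branch_vec f v p * branch_vec g v p" using v by (simp add: lifted_branches_Cons)
    qed
    finally show "(\<Sum>q\<in>(Cons u) ` F v. lifted_branches f q * lifted_branches g q) = (\<Sum>p\<in>F v. branch_vec f v p * branch_vec g v p)" .
  qed
  also have "\<dots> = (\<Sum>v\<in>nbrs V E u. branch_functional v (f * g))"
    by (rule sum.cong[OF refl]) (simp add: F_def fs_inner_def[symmetric] fs_inner_branch_vec)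
  finally show ?thesis .
qed

lemma fs_inner_adj_op_lifted_branches:
  assumes "finite (supp \<psi>)"
  shows "fs_inner (T.adj_op \<psi>) (lifted_branches f)
    = fs_inner \<psi> (lifted_branches ([:0, 1:] * f)) + (\<Sum>v\<in>nbrs V E u. branch_functional v f) * \<psi> [u]"
  using assms
  by (simp add: T.adj_op_self_adjoint finite_supp_lifted_branches adj_op_lifted_branches
      fs_inner_add_right fs_inner_scale_right fs_inner_indicator_right)

lemma root_branch_identity:
  "fs_inner (T.poly_op ([:- \<theta>, 1:] * p) (indicator {[u]})) (lifted_branches f)
    = fs_inner (T.poly_op p (indicator {[u]})) (lifted_branches ([:- \<theta>, 1:] * f))
      + (\<Sum>v\<in>nbrs V E u. branch_functional v f) * root_functional p"
proof -
  define \<psi> where "\<psi> = T.poly_op p (indicator {[u]})"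
  have fin: "finite (supp \<psi>)"
    unfolding \<psi>_def by (rule T.finite_supp_poly_op) simp
  have "[:- \<theta>, 1:] * q = [:0, 1:] * q + smult (- \<theta>) q" for q :: "real poly"
    by (simp add: algebra_simps)
  then have "T.poly_op ([:- \<theta>, 1:] * p) (indicator {[u]}) = (\<lambda>x. T.adj_op \<psi> x + (- \<theta>) * \<psi> x)"
    and "lifted_branches ([:- \<theta>, 1:] * f) = (\<lambda>q. lifted_branches ([:0, 1:] * f) q + (- \<theta>) * lifted_branches f q)"
    by (simp_all only: \<psi>_def T.poly_op_add T.poly_op_smult T.poly_op_mult T.poly_op_X
        lifted_branches_add lifted_branches_smult)
  moreover have "\<psi> [u] = root_functional p"
    using fin by (simp add: \<psi>_def root_functional_def T.spectral_functional_def fs_inner_indicator_right)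
  ultimately show ?thesis
    using fin T.finite_supp_adj_op[OF fin]
    by (simp only: fs_inner_add_left fs_inner_add_right finite_supp_scale fs_inner_scale_left
        fs_inner_scale_right fs_inner_adj_op_lifted_branches) (simp add: algebra_simps \<psi>_def[symmetric])
qed

lemma root_branch_Cauchy_Schwarz:
  "\<bar>(\<Sum>v\<in>nbrs V E u. branch_functional v f) * root_functional p\<bar> \<le>
     sqrt (root_functional (([:- \<theta>, 1:] * p) * ([:- \<theta>, 1:] * p))) * sqrt (\<Sum>v\<in>nbrs V E u. branch_functional v (f * f))
   + sqrt (root_functional (p * p)) * sqrt (\<Sum>v\<in>nbrs V E u. branch_functional v (([:- \<theta>, 1:] * f) * ([:- \<theta>, 1:] * f)))"
proof -
  define e where "e = (indicator {[u]} :: 'a list \<Rightarrow> real)"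
  have fe: "finite (supp e)" by (simp add: e_def)
  have fpe: "finite (supp (T.poly_op q e))" for q by (rule T.finite_supp_poly_op[OF fe])
  have nrm: "fs_inner (T.poly_op q e) (T.poly_op q e) = root_functional (q * q)" for q
    by (simp add: root_functional_def T.spectral_functional_mult fe e_def)
  let ?q = "[:- \<theta>, 1:] * p" and ?g = "[:- \<theta>, 1:] * f"
  have "(\<Sum>v\<in>nbrs V E u. branch_functional v f) * root_functional p = fs_inner (T.poly_op ?q e) (lifted_branches f) - fs_inner (T.poly_op p e) (lifted_branches ?g)"
    using root_branch_identity[of \<theta> p f] by (simp add: e_def)
  then have "\<bar>(\<Sum>v\<in>nbrs V E u. branch_functional v f) * root_functional p\<bar> \<le> \<bar>fs_inner (T.poly_op ?q e) (lifted_branches f)\<bar> + \<bar>fs_inner (T.poly_op p e) (lifted_branches ?g)\<bar>"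
    by simp
  also have "\<dots> \<le> sqrt (fs_inner (T.poly_op ?q e) (T.poly_op ?q e)) * sqrt (fs_inner (lifted_branches f) (lifted_branches f))
      + sqrt (fs_inner (T.poly_op p e) (T.poly_op p e)) * sqrt (fs_inner (lifted_branches ?g) (lifted_branches ?g))"
    by (intro add_mono fs_inner_Cauchy_Schwarz fpe finite_supp_lifted_branches)
  finally show ?thesis by (simp add: nrm fs_inner_lifted_branches)
qed

end


section \<open>Atoms of the branch measures force quadratic decay at \<open>\<theta>\<close>\<close>

lemma peak_polynomials:
  fixes \<theta> \<beta> :: real
  obtains P :: "nat \<Rightarrow> real poly" where
    "\<And>x. x \<in> {-\<beta>..\<beta>} \<Longrightarrow> (\<lambda>t. poly (P t) x) \<longlonglongrightarrow> indicator {\<theta>} x"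
    "\<And>t x. x \<in> {-\<beta>..\<beta>} \<Longrightarrow> \<bar>poly (P t) x\<bar> \<le> 1"
proof -
  define K where "K = (\<bar>\<beta>\<bar> + \<bar>\<theta>\<bar>)\<^sup>2 + 1"
  have K: "0 < K" by (simp add: K_def add_nonneg_pos)
  define h where "h x = 1 - (x - \<theta>)\<^sup>2 / K" for x
  have h: "0 \<le> h x \<and> h x \<le> 1 \<and> (x \<noteq> \<theta> \<longrightarrow> h x < 1)" if "x \<in> {-\<beta>..\<beta>}" for x
  proof -
    have "\<bar>x - \<theta>\<bar> \<le> \<bar>\<beta>\<bar> + \<bar>\<theta>\<bar>" using that by auto
    then have "(x - \<theta>)\<^sup>2 \<le> (\<bar>\<beta>\<bar> + \<bar>\<theta>\<bar>)\<^sup>2"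
      by (metis abs_ge_zero power2_abs power_mono)
    then have "(x - \<theta>)\<^sup>2 / K \<le> 1" using K by (simp add: K_def)
    then show ?thesis using K by (auto simp: h_def)
  qed
  define P where "P t = ([:1:] - smult (1/K) ([:- \<theta>, 1:] * [:- \<theta>, 1:])) ^ t" for t
  have "poly ([:1:] - smult (1/K) ([:- \<theta>, 1:] * [:- \<theta>, 1:])) x = h x" for x
    using K by (simp add: h_def power2_eq_square field_simps)
  then have poly_P: "poly (P t) x = h x ^ t" for t x
    by (simp add: P_def)
  show ?thesis
  proof
    fix x assume x: "x \<in> {-\<beta>..\<beta>}"
    show "(\<lambda>t. poly (P t) x) \<longlonglongrightarrow> indicator {\<theta>} x"
      using h[OF x] by (cases "x = \<theta>") (auto simp: poly_P h_def intro!: LIMSEQ_power_zero)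
    show "\<bar>poly (P t) x\<bar> \<le> 1" for t
      using h[OF x] by (simp add: poly_P power_le_one)
  qed
qed

lemma tent_function:
  fixes \<theta> \<epsilon> :: real
  assumes "0 < \<epsilon>"
  obtains \<tau> :: "real \<Rightarrow> real" where "\<And>x. isCont \<tau> x" "\<And>x. \<bar>\<tau> x\<bar> \<le> 1"
    "\<And>x. indicator {\<theta> - \<epsilon>..\<theta> + \<epsilon>} x \<le> \<tau> x"
    "\<And>x. ((x - \<theta>) * \<tau> x)\<^sup>2 \<le> 4 * \<epsilon>\<^sup>2 * indicator {\<theta> - 2 * \<epsilon>..\<theta> + 2 * \<epsilon>} x"
proof
  define \<tau> where "\<tau> x = max 0 (min 1 (2 - \<bar>x - \<theta>\<bar> / \<epsilon>))" for x
  show "isCont \<tau> x" for x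
    unfolding \<tau>_def using assms by (auto intro!: continuous_intros)
  show \<tau>_bound: "\<bar>\<tau> x\<bar> \<le> 1" for x
    by (simp add: \<tau>_def)
  show "indicator {\<theta> - \<epsilon>..\<theta> + \<epsilon>} x \<le> \<tau> x" for x
    using assms by (auto simp: \<tau>_def indicator_def abs_le_iff field_simps)
  show "((x - \<theta>) * \<tau> x)\<^sup>2 \<le> 4 * \<epsilon>\<^sup>2 * indicator {\<theta> - 2 * \<epsilon>..\<theta> + 2 * \<epsilon>} x" for x
  proof (cases "\<bar>x - \<theta>\<bar> \<le> 2 * \<epsilon>")
    case True
    then have "\<bar>(x - \<theta>) * \<tau> x\<bar> \<le> 2 * \<epsilon> * 1"
      unfolding abs_mult using \<tau>_bound by (intro mult_mono) auto
    then have "((x - \<theta>) * \<tau> x)\<^sup>2 \<le> (2 * \<epsilon>)\<^sup>2"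
      by (metis abs_ge_zero power2_abs power_mono mult_1_right)
    then show ?thesis
      using True by (simp add: power_mult_distrib indicator_def abs_le_iff)
  next
    case False
    then have "\<tau> x = 0"
      using assms by (simp add: \<tau>_def field_simps)
    then show ?thesis by simp
  qed
qed

context rooted_graph
begin

abbreviation root_measure :: "real measure" where
  "root_measure \<equiv> matching_measure V E u"

abbreviation branch_measure :: "'a \<Rightarrow> real measure" where
  "branch_measure v \<equiv> matching_measure (V - {u}) E v"

lemma root_measure_spectral:
  shows "real_distribution root_measure"
    and "AE x in root_measure. x \<in> {-real (Suc D)..real (Suc D)}"
    and "root_functional p = (\<integral>x. poly p x \<partial>root_measure)"
  using matching_measure_spectral[OF degree]
  by (auto simp: root_functional_def intro: T.spectral_functional_eq_integral)

lemma branch_measure_spectral: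
  shows "real_distribution (branch_measure v)"
    and "AE x in branch_measure v. x \<in> {-real (Suc D)..real (Suc D)}"
    and "branch_functional v p = (\<integral>x. poly p x \<partial>branch_measure v)"
  using matching_measure_spectral[OF max_degree_le_Diff[OF degree]]
  by (auto simp: branch_functional_def intro: B.spectral_functional_eq_integral)

lemma root_branch_Cauchy_Schwarz_integral:
  "\<bar>(\<Sum>v\<in>nbrs V E u. \<integral>x. poly f x \<partial>branch_measure v) * (\<integral>x. poly p x \<partial>root_measure)\<bar>
    \<le> sqrt (\<integral>x. ((x - \<theta>) * poly p x)\<^sup>2 \<partial>root_measure)
        * sqrt (\<Sum>v\<in>nbrs V E u. \<integral>x. (poly f x)\<^sup>2 \<partial>branch_measure v)
      + sqrt (\<integral>x. (poly p x)\<^sup>2 \<partial>root_measure)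
        * sqrt (\<Sum>v\<in>nbrs V E u. \<integral>x. ((x - \<theta>) * poly f x)\<^sup>2 \<partial>branch_measure v)"
proof -
  have "poly ([:- \<theta>, 1:] * q * ([:- \<theta>, 1:] * q)) = (\<lambda>x. ((x - \<theta>) * poly q x)\<^sup>2)"
    and "poly (q * q) = (\<lambda>x. (poly q x)\<^sup>2)" for q :: "real poly"
    by (simp_all add: fun_eq_iff power2_eq_square algebra_simps)
  then show ?thesis
    using root_branch_Cauchy_Schwarz[of f p \<theta>]
    by (simp only: root_measure_spectral(3) branch_measure_spectral(3))
qed

lemma branch_peak_limits:
  obtains P :: "nat \<Rightarrow> real poly" where
    "\<And>v. (\<lambda>t. \<integral>x. poly (P t) x \<partial>branch_measure v) \<longlonglongrightarrow> measure (branch_measure v) {\<theta>}"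
    "\<And>v. (\<lambda>t. \<integral>x. (poly (P t) x)\<^sup>2 \<partial>branch_measure v) \<longlonglongrightarrow> measure (branch_measure v) {\<theta>}"
    "\<And>v. (\<lambda>t. \<integral>x. ((x - \<theta>) * poly (P t) x)\<^sup>2 \<partial>branch_measure v) \<longlonglongrightarrow> 0"
proof -
  define \<beta> where "\<beta> = real (Suc D)"
  obtain P where P: "\<And>x. x \<in> {-\<beta>..\<beta>} \<Longrightarrow> (\<lambda>t. poly (P t) x) \<longlonglongrightarrow> indicator {\<theta>} x"
    "\<And>t x. x \<in> {-\<beta>..\<beta>} \<Longrightarrow> \<bar>poly (P t) x\<bar> \<le> 1"
    using peak_polynomials by blast
  have dist: "real_distribution (branch_measure v)" "AE x in branch_measure v. x \<in> {-\<beta>..\<beta>}" for v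
    using branch_measure_spectral unfolding \<beta>_def by blast+
  have tendsto: "(\<lambda>t. \<integral>x. F (poly (P t) x) x \<partial>branch_measure v) \<longlonglongrightarrow> (\<integral>x. F (indicator {\<theta>} x) x \<partial>branch_measure v)"
    if "\<And>x. isCont (\<lambda>y. F y x) (indicator {\<theta>} x)" "\<And>y x. \<bar>y\<bar> \<le> 1 \<Longrightarrow> x \<in> {-\<beta>..\<beta>} \<Longrightarrow> \<bar>F y x\<bar> \<le> M"
      "\<And>g. g \<in> borel_measurable borel \<Longrightarrow> (\<lambda>x. F (g x) x) \<in> borel_measurable borel"
    for F :: "real \<Rightarrow> real \<Rightarrow> real" and M v
    by (rule real_distribution.integral_tendsto_AE_bounded[OF dist, where B = M])
       (use that P in \<open>auto intro: isCont_tendsto_compose\<close>)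
  have indicator_simps: "(indicator {\<theta>} x :: real)\<^sup>2 = indicator {\<theta>} x" "(x - \<theta>) * indicator {\<theta>} x = 0" for x
    by (simp_all add: indicator_def)
  have "\<bar>(x - \<theta>) * y\<bar> \<le> (\<beta> + \<bar>\<theta>\<bar>) * 1" if "\<bar>y\<bar> \<le> 1" "x \<in> {-\<beta>..\<beta>}" for x y
    unfolding abs_mult using that by (intro mult_mono) auto
  then have bound: "\<bar>((x - \<theta>) * y)\<^sup>2\<bar> \<le> (\<beta> + \<bar>\<theta>\<bar>)\<^sup>2" if "\<bar>y\<bar> \<le> 1" "x \<in> {-\<beta>..\<beta>}" for x y
    using that by (simp add: abs_le_square_iff[symmetric])
  show ?thesis
  proof
    show "(\<lambda>t. \<integral>x. poly (P t) x \<partial>branch_measure v) \<longlonglongrightarrow> measure (branch_measure v) {\<theta>}" for v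
      using tendsto[of "\<lambda>y x. y" 1 v] dist(1) by (simp add: real_distribution.space_eq_univ)
    show "(\<lambda>t. \<integral>x. (poly (P t) x)\<^sup>2 \<partial>branch_measure v) \<longlonglongrightarrow> measure (branch_measure v) {\<theta>}" for v
      using tendsto[of "\<lambda>y x. y\<^sup>2" 1 v] dist(1)
      by (simp add: real_distribution.space_eq_univ abs_square_le_1 indicator_simps)
    show "(\<lambda>t. \<integral>x. ((x - \<theta>) * poly (P t) x)\<^sup>2 \<partial>branch_measure v) \<longlonglongrightarrow> 0" for v
      using tendsto[of "\<lambda>y x. ((x - \<theta>) * y)\<^sup>2" "(\<beta> + \<bar>\<theta>\<bar>)\<^sup>2" v] bound
      by (simp add: indicator_simps)
  qed
qed

lemma atom_moment_ineq_poly: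
  "(\<Sum>v\<in>nbrs V E u. measure (branch_measure v) {\<theta>}) * (\<integral>x. poly p x \<partial>root_measure)\<^sup>2
    \<le> (\<integral>x. ((x - \<theta>) * poly p x)\<^sup>2 \<partial>root_measure)"
proof -
  define c where "c = (\<Sum>v\<in>nbrs V E u. measure (branch_measure v) {\<theta>})"
  define I where "I = (\<integral>x. poly p x \<partial>root_measure)"
  define A where "A = (\<integral>x. ((x - \<theta>) * poly p x)\<^sup>2 \<partial>root_measure)"
  define B where "B = (\<integral>x. (poly p x)\<^sup>2 \<partial>root_measure)"
  obtain P where lim1: "\<And>v. (\<lambda>t. \<integral>x. poly (P t) x \<partial>branch_measure v) \<longlonglongrightarrow> measure (branch_measure v) {\<theta>}"
    and lim2: "\<And>v. (\<lambda>t. \<integral>x. (poly (P t) x)\<^sup>2 \<partial>branch_measure v) \<longlonglongrightarrow> measure (branch_measure v) {\<theta>}"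
    and lim3: "\<And>v. (\<lambda>t. \<integral>x. ((x - \<theta>) * poly (P t) x)\<^sup>2 \<partial>branch_measure v) \<longlonglongrightarrow> 0"
    using branch_peak_limits by blast
  have lim_left: "(\<lambda>t. \<bar>(\<Sum>v\<in>nbrs V E u. \<integral>x. poly (P t) x \<partial>branch_measure v) * I\<bar>) \<longlonglongrightarrow> \<bar>c * I\<bar>"
    unfolding c_def by (intro tendsto_intros lim1)
  have lim_right: "(\<lambda>t. sqrt A * sqrt (\<Sum>v\<in>nbrs V E u. \<integral>x. (poly (P t) x)\<^sup>2 \<partial>branch_measure v)
      + sqrt B * sqrt (\<Sum>v\<in>nbrs V E u. \<integral>x. ((x - \<theta>) * poly (P t) x)\<^sup>2 \<partial>branch_measure v))
    \<longlonglongrightarrow> sqrt A * sqrt c + sqrt B * sqrt (\<Sum>v\<in>nbrs V E u. 0)"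
    unfolding c_def by (intro tendsto_intros lim2 lim3)
  have "\<bar>c * I\<bar> \<le> sqrt A * sqrt c + sqrt B * sqrt (\<Sum>v\<in>nbrs V E u. 0)"
    using root_branch_Cauchy_Schwarz_integral[of "P _" p \<theta>]
    by (intro tendsto_le[OF trivial_limit_sequentially lim_right lim_left])
       (simp add: I_def A_def B_def)
  then have "(c * I)\<^sup>2 \<le> (sqrt A * sqrt c)\<^sup>2"
    by (simp add: abs_le_square_iff[symmetric])
  moreover have "0 \<le> c" "0 \<le> A"
    by (simp_all add: c_def A_def sum_nonneg)
  ultimately have "c * (c * I\<^sup>2) \<le> c * A"
    by (simp add: power_mult_distrib power2_eq_square mult_ac)
  then show ?thesis
    using \<open>0 \<le> c\<close> \<open>0 \<le> A\<close> unfolding c_def[symmetric] I_def[symmetric] A_def[symmetric]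
    by (cases "c = 0") auto
qed

lemma atom_moment_ineq:
  fixes g :: "real \<Rightarrow> real"
  assumes cont: "\<And>x. isCont g x" and bound: "\<And>x. \<bar>g x\<bar> \<le> M"
  shows "(\<Sum>v\<in>nbrs V E u. measure (branch_measure v) {\<theta>}) * (\<integral>x. g x \<partial>root_measure)\<^sup>2
    \<le> (\<integral>x. ((x - \<theta>) * g x)\<^sup>2 \<partial>root_measure)"
proof -
  define \<beta> where "\<beta> = real (Suc D)"
  obtain P where P_tendsto: "\<And>x. x \<in> {-\<beta>..\<beta>} \<Longrightarrow> (\<lambda>n. poly (P n) x) \<longlonglongrightarrow> g x"
    and P_bounded: "\<And>n x. x \<in> {-\<beta>..\<beta>} \<Longrightarrow> \<bar>poly (P n) x\<bar> \<le> M + 1"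
    using polynomial_approximation_seq[OF cont bound] by blast
  have dist: "real_distribution root_measure" "AE x in root_measure. x \<in> {-\<beta>..\<beta>}"
    using root_measure_spectral unfolding \<beta>_def by blast+
  have meas: "g \<in> borel_measurable borel"
    using cont by (intro borel_measurable_continuous_onI continuous_at_imp_continuous_on) auto
  have "(\<lambda>n. \<integral>x. poly (P n) x \<partial>root_measure) \<longlonglongrightarrow> (\<integral>x. g x \<partial>root_measure)"
    by (rule real_distribution.integral_tendsto_AE_bounded[OF dist, where B = "M + 1"])
       (use meas P_tendsto P_bounded in auto)
  then have lim_left: "(\<lambda>n. (\<Sum>v\<in>nbrs V E u. measure (branch_measure v) {\<theta>})
        * (\<integral>x. poly (P n) x \<partial>root_measure)\<^sup>2)
      \<longlonglongrightarrow> (\<Sum>v\<in>nbrs V E u. measure (branch_measure v) {\<theta>}) * (\<integral>x. g x \<partial>root_measure)\<^sup>2"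
    by (intro tendsto_intros)
  have lim_right: "(\<lambda>n. \<integral>x. ((x - \<theta>) * poly (P n) x)\<^sup>2 \<partial>root_measure)
      \<longlonglongrightarrow> (\<integral>x. ((x - \<theta>) * g x)\<^sup>2 \<partial>root_measure)"
  proof (rule real_distribution.integral_tendsto_AE_bounded[OF dist, where B = "((\<beta> + \<bar>\<theta>\<bar>) * (M + 1))\<^sup>2"])
    fix n x assume x: "x \<in> {-\<beta>..\<beta>}"
    have "\<bar>(x - \<theta>) * poly (P n) x\<bar> \<le> (\<beta> + \<bar>\<theta>\<bar>) * (M + 1)"
      unfolding abs_mult using x P_bounded[OF x] by (intro mult_mono) auto
    then show "\<bar>((x - \<theta>) * poly (P n) x)\<^sup>2\<bar> \<le> ((\<beta> + \<bar>\<theta>\<bar>) * (M + 1))\<^sup>2"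
      by (simp add: abs_le_square_iff[symmetric])
  qed (use meas P_tendsto in \<open>auto intro!: tendsto_intros\<close>)
  show ?thesis
    by (rule tendsto_le[OF trivial_limit_sequentially lim_right lim_left]) (simp add: atom_moment_ineq_poly)
qed

lemma window_mass_ineq:
  assumes "0 < \<epsilon>"
  shows "(\<Sum>v\<in>nbrs V E u. measure (branch_measure v) {\<theta>}) * (measure root_measure {\<theta> - \<epsilon>..\<theta> + \<epsilon>})\<^sup>2
    \<le> 4 * \<epsilon>\<^sup>2 * measure root_measure {\<theta> - 2 * \<epsilon>..\<theta> + 2 * \<epsilon>}"
proof -
  interpret \<nu>: real_distribution root_measure
    by (rule root_measure_spectral(1))
  define c where "c = (\<Sum>v\<in>nbrs V E u. measure (branch_measure v) {\<theta>})"
  obtain \<tau> where cont: "\<And>x. isCont \<tau> x" and \<tau>_bound: "\<And>x. \<bar>\<tau> x\<bar> \<le> 1"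
    and below: "\<And>x. indicator {\<theta> - \<epsilon>..\<theta> + \<epsilon>} x \<le> \<tau> x"
    and above: "\<And>x. ((x - \<theta>) * \<tau> x)\<^sup>2 \<le> 4 * \<epsilon>\<^sup>2 * indicator {\<theta> - 2 * \<epsilon>..\<theta> + 2 * \<epsilon>} x"
    using tent_function[OF assms] by blast
  have meas: "\<tau> \<in> borel_measurable borel"
    using cont by (intro borel_measurable_continuous_onI continuous_at_imp_continuous_on) auto
  have "4 * \<epsilon>\<^sup>2 * indicator {\<theta> - 2 * \<epsilon>..\<theta> + 2 * \<epsilon>} x \<le> 4 * \<epsilon>\<^sup>2 * (1 :: real)" for x
    by (intro mult_left_mono) (auto simp: indicator_def)
  then have "\<bar>((x - \<theta>) * \<tau> x)\<^sup>2\<bar> \<le> 4 * \<epsilon>\<^sup>2 * 1" for x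
    using order_trans[OF above] by simp
  then have integrable: "integrable root_measure \<tau>" "integrable root_measure (\<lambda>x. ((x - \<theta>) * \<tau> x)\<^sup>2)"
    "integrable root_measure (indicator {\<theta> - 2 * \<epsilon>..\<theta> + 2 * \<epsilon>} :: real \<Rightarrow> real)"
    using meas \<tau>_bound
    by (intro \<nu>.integrable_const_bound[of _ 1] \<nu>.integrable_const_bound[of _ "4 * \<epsilon>\<^sup>2"];
        simp add: indicator_def)+
  have "measure root_measure {\<theta> - \<epsilon>..\<theta> + \<epsilon>} = (\<integral>x. indicator {\<theta> - \<epsilon>..\<theta> + \<epsilon>} x \<partial>root_measure)"
    by simp
  also have "\<dots> \<le> (\<integral>x. \<tau> x \<partial>root_measure)"
    using below integrable by (intro integral_mono) (auto intro: \<nu>.integrable_const_bound[where B = 1])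
  finally have "c * (measure root_measure {\<theta> - \<epsilon>..\<theta> + \<epsilon>})\<^sup>2 \<le> c * (\<integral>x. \<tau> x \<partial>root_measure)\<^sup>2"
    by (intro mult_left_mono power_mono) (auto simp: c_def sum_nonneg)
  also have "\<dots> \<le> (\<integral>x. ((x - \<theta>) * \<tau> x)\<^sup>2 \<partial>root_measure)"
    unfolding c_def by (rule atom_moment_ineq[OF cont \<tau>_bound])
  also have "\<dots> \<le> (\<integral>x. 4 * \<epsilon>\<^sup>2 * indicator {\<theta> - 2 * \<epsilon>..\<theta> + 2 * \<epsilon>} x \<partial>root_measure)"
    using above integrable by (intro integral_mono) auto
  finally show ?thesis
    by (simp add: c_def)
qed

end

lemma window_ineq_linear_bound:
  fixes a :: "real \<Rightarrow> real"
  assumes a_nonneg: "\<And>\<epsilon>. 0 \<le> a \<epsilon>" and a_le_1: "\<And>\<epsilon>. a \<epsilon> \<le> 1" and c: "0 < c"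
    and window: "\<And>\<epsilon>. 0 < \<epsilon> \<Longrightarrow> c * (a \<epsilon>)\<^sup>2 \<le> 4 * \<epsilon>\<^sup>2 * a (2 * \<epsilon>)"
    and "0 < \<epsilon>"
  shows "a \<epsilon> \<le> 2 / sqrt c * \<epsilon>"
proof -
  have "4 * \<epsilon>\<^sup>2 * a (2 * \<epsilon>) \<le> 4 * \<epsilon>\<^sup>2 * 1"
    by (intro mult_left_mono a_le_1) simp
  with window[OF \<open>0 < \<epsilon>\<close>] have "c * (a \<epsilon>)\<^sup>2 \<le> 4 * \<epsilon>\<^sup>2 * 1"
    by (rule order_trans)
  also have "\<dots> = c * (2 / sqrt c * \<epsilon>)\<^sup>2"
    using c by (simp add: power_mult_distrib power_divide)
  finally have "(a \<epsilon>)\<^sup>2 \<le> (2 / sqrt c * \<epsilon>)\<^sup>2"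
    using c by simp
  then show ?thesis
    using c \<open>0 < \<epsilon>\<close> a_nonneg[of \<epsilon>] by (simp add: power2_le_iff_abs_le)
qed

text \<open>Feeding the linear bound back into the window inequality gives \<open>a(\<epsilon>) = O(\<epsilon>\<^sup>3\<^sup>/\<^sup>2)\<close>.\<close>

lemma window_ineq_tendsto_0:
  fixes a :: "real \<Rightarrow> real"
  assumes a_nonneg: "\<And>\<epsilon>. 0 \<le> a \<epsilon>" and a_le_1: "\<And>\<epsilon>. a \<epsilon> \<le> 1" and c: "0 < c"
    and window: "\<And>\<epsilon>. 0 < \<epsilon> \<Longrightarrow> c * (a \<epsilon>)\<^sup>2 \<le> 4 * \<epsilon>\<^sup>2 * a (2 * \<epsilon>)"
  shows "((\<lambda>\<epsilon>. a \<epsilon> / \<epsilon>) \<longlongrightarrow> 0) (at_right 0)"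
proof -
  define K where "K = 2 / sqrt c"
  define C where "C = 8 * K / c"
  have bound: "a \<epsilon> / \<epsilon> \<le> sqrt (C * \<epsilon>)" if "0 < \<epsilon>" for \<epsilon>
  proof -
    have "4 * \<epsilon>\<^sup>2 * a (2 * \<epsilon>) \<le> 4 * \<epsilon>\<^sup>2 * (K * (2 * \<epsilon>))"
      using that window_ineq_linear_bound[OF assms, of "2 * \<epsilon>"]
      by (intro mult_left_mono) (auto simp: K_def)
    with window[OF that] have "c * (a \<epsilon>)\<^sup>2 \<le> 4 * \<epsilon>\<^sup>2 * (K * (2 * \<epsilon>))"
      by (rule order_trans)
    then have "(a \<epsilon> / \<epsilon>)\<^sup>2 \<le> C * \<epsilon>"
      using c that by (simp add: C_def power_divide field_simps power2_eq_square)
    then show ?thesis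
      by (rule real_le_rsqrt)
  qed
  show ?thesis
  proof (rule tendsto_sandwich[where f = "\<lambda>_. 0" and h = "\<lambda>\<epsilon>. sqrt (C * \<epsilon>)"])
    show "\<forall>\<^sub>F \<epsilon> in at_right 0. 0 \<le> a \<epsilon> / \<epsilon>"
      using eventually_at_right_less[of 0] by eventually_elim (simp add: a_nonneg)
    show "\<forall>\<^sub>F \<epsilon> in at_right 0. a \<epsilon> / \<epsilon> \<le> sqrt (C * \<epsilon>)"
      using eventually_at_right_less[of 0] by eventually_elim (rule bound)
    have "((\<lambda>\<epsilon>. sqrt (C * \<epsilon>)) \<longlongrightarrow> sqrt (C * 0)) (at_right 0)"
      by (intro tendsto_intros)
    then show "((\<lambda>\<epsilon>. sqrt (C * \<epsilon>)) \<longlongrightarrow> 0) (at_right 0)"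
      by simp
  qed simp
qed

lemma no_extended_states_if_window_ineq:
  fixes M :: "real measure"
  assumes M: "real_distribution M" and c: "0 < c"
    and window: "\<And>\<epsilon>. 0 < \<epsilon> \<Longrightarrow>
      c * (measure M {\<theta> - \<epsilon>..\<theta> + \<epsilon>})\<^sup>2 \<le> 4 * \<epsilon>\<^sup>2 * measure M {\<theta> - 2 * \<epsilon>..\<theta> + 2 * \<epsilon>}"
  shows "measure M {\<theta>} = 0"
    and "((\<lambda>\<epsilon>. measure M {\<theta> - \<epsilon>..\<theta> + \<epsilon>} / \<epsilon>) \<longlongrightarrow> 0) (at_right 0)"
proof -
  interpret real_distribution M by (rule M)
  define a where "a \<epsilon> = measure M {\<theta> - \<epsilon>..\<theta> + \<epsilon>}" for \<epsilon>
  have a: "\<And>\<epsilon>. 0 \<le> a \<epsilon>" "\<And>\<epsilon>. a \<epsilon> \<le> 1"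
    "\<And>\<epsilon>. 0 < \<epsilon> \<Longrightarrow> c * (a \<epsilon>)\<^sup>2 \<le> 4 * \<epsilon>\<^sup>2 * a (2 * \<epsilon>)"
    using window by (simp_all add: a_def)
  show "((\<lambda>\<epsilon>. measure M {\<theta> - \<epsilon>..\<theta> + \<epsilon>} / \<epsilon>) \<longlongrightarrow> 0) (at_right 0)"
    using window_ineq_tendsto_0[OF a(1,2) c a(3)] by (simp add: a_def)
  show "measure M {\<theta>} = 0"
  proof (rule antisym[OF field_le_epsilon measure_nonneg])
    fix \<delta> :: real assume "0 < \<delta>"
    define \<epsilon> where "\<epsilon> = \<delta> * sqrt c / 2"
    have "0 < \<epsilon>"
      using \<open>0 < \<delta>\<close> c by (simp add: \<epsilon>_def)
    then have "measure M {\<theta>} \<le> a \<epsilon>"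
      unfolding a_def by (intro finite_measure_mono) auto
    also have "\<dots> \<le> 0 + \<delta>"
      using window_ineq_linear_bound[OF a(1,2) c a(3) \<open>0 < \<epsilon>\<close>] c by (simp add: \<epsilon>_def)
    finally show "measure M {\<theta>} \<le> 0 + \<delta>" .
  qed
qed

theorem proposition7p6:
  fixes \<theta> :: real and V :: "'a set" and E :: "'a \<Rightarrow> 'a \<Rightarrow> bool" and D :: nat and u :: 'a
  assumes "simple_graph V E"
    and "max_degree_le V E D"
    and "u \<in> V"
    and "theta_positive \<theta> V E u"
  shows "((\<lambda>\<epsilon>. (measure (matching_measure V E u) {\<theta> - \<epsilon>..\<theta> + \<epsilon>}
            - measure (matching_measure V E u) {\<theta>}) / \<epsilon>) \<longlongrightarrow> 0) (at_right 0)"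
proof -
  interpret rooted_graph V E u D
    using assms(1-3) by unfold_locales
  have "0 < (\<Sum>v\<in>nbrs V E u. measure (branch_measure v) {\<theta>})"
    using assms(4) by (simp add: theta_positive_def)
  note no_extended_states =
    no_extended_states_if_window_ineq[OF root_measure_spectral(1) this window_mass_ineq]
  show ?thesis
    using no_extended_states by simp
qed

end
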